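(* Let $\alpha>2$, $P>0$, $\sigma^2\ge0$, $\gamma_{th}>0$, $\mu>0$, let $l\ge1$ be an integer, and let $0<D_{i-1}<D_i$. Let $R$ be a random variable with density $f_R(r)=\frac{2r}{D_i^2-D_{i-1}^2}$ on $[D_{i-1},D_i]$. Let $\Phi$ be a Poisson point process of intensity $\mu$ on $\{y\in\mathbb{R}^2:|y|\ge D_i\}$, independent of $R$. For $\beta=1,\dots,l$ define $$\mathrm{SINR}^\beta=\frac{P h_0^\beta R^{-\alpha}}{\sum_{y\in\Phi}P h_y^\beta |y|^{-\alpha}+\sigma^2},$$ where all fading variables are i.i.d. $\mathrm{Exp}(1)$ and independent of $R$ and $\Phi$. Then $$p(\gamma_{th}):=\mathbb{P}\big[\mathrm{SINR}^\beta\ge\gamma_{th}\ \forall\beta\le l\big]=\int_{D_{i-1}}^{D_i}\exp\Big(-\frac{l\gamma_{th}\sigma^2 r^\alpha}{P}\Big)\exp\big(-2\pi\mu\,\mathcal{F}_i(r)\big)f_R(r)\,dr,$$ where $$\mathcal{F}_i(r)=\int_{D_i}^{\infty}\Big(1-\Big(\frac{1}{1+\gamma_{th}r^\alpha y^{-\alpha}}\Big)^{l}\Big)y\,dy .$$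
   Context: This is the uplink model for NB-IoT "CE group $i$", $i\in\{1,2\}$ (for group 2 it is "Case 1"). All devices transmit with the same fixed power $P$. The typical device is located uniformly in the annulus $D_{i-1}\le r\le D_i$ around its base station. In the paper $D_0=(\delta_1\omega/P_{DL})^{-1/\alpha}$, $D_1=(\delta_2\omega/P_{DL})^{-1/\alpha}$ and $D_2=1/\sqrt{\pi\lambda_B}$. The interferer intensity is $\mu=\mathcal{A}_i^1\mathcal{R}_i^1\lambda_i^a$, where $\lambda_i^a=\lambda_i/S_i$. The index $l=4k_i$ counts the symbol groups over $k_i$ repetitions; interferer locations are common to all $l$ symbol groups and the fading is independent across them. *)

theory Defs
  imports "HOL-Probability.Probability"
begin

text \<open>Points of the plane are represented as complex numbers, so that cmod y = |y|.
  A point process is represented by an enumeration Y :: nat => omega => complex of its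
  points (counted with multiplicity via the indices).\<close>

definition pp_count :: "(nat \<Rightarrow> 'a \<Rightarrow> complex) \<Rightarrow> complex set \<Rightarrow> 'a \<Rightarrow> nat" where
  "pp_count Y A \<omega> = card {n. Y n \<omega> \<in> A}"

definition poisson_pp ::
  "'a measure \<Rightarrow> real \<Rightarrow> complex set \<Rightarrow> (nat \<Rightarrow> 'a \<Rightarrow> complex) \<Rightarrow> bool" where
  "poisson_pp M \<mu> S Y \<longleftrightarrow>
     (\<forall>n. Y n \<in> borel_measurable M) \<and>
     (AE \<omega> in M. \<forall>n. Y n \<omega> \<in> S) \<and>
     (\<forall>A. A \<in> sets borel \<and> bounded A \<longrightarrow> (AE \<omega> in M. finite {n. Y n \<omega> \<in> A})) \<and>
     (\<forall>(k::nat) (A :: nat \<Rightarrow> complex set).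
        (\<forall>j<k. A j \<in> sets borel \<and> A j \<subseteq> S \<and> bounded (A j)) \<and> disjoint_family_on A {..<k}
        \<longrightarrow> prob_space.indep_vars M (\<lambda>_. count_space UNIV) (\<lambda>j. pp_count Y (A j)) {..<k} \<and>
            (\<forall>j<k. \<forall>m::nat.
               measure M {\<omega> \<in> space M. pp_count Y (A j) \<omega> = m}
               = (\<mu> * measure lborel (A j)) ^ m / fact m * exp (- (\<mu> * measure lborel (A j)))))"

definition F_i :: "real \<Rightarrow> real \<Rightarrow> nat \<Rightarrow> real \<Rightarrow> real \<Rightarrow> real" where
  "F_i \<alpha> \<gamma> l D1 r =
     (LBINT y:{D1..}. (1 - (1 / (1 + \<gamma> * r powr \<alpha> * y powr (-\<alpha>))) ^ l) * y)"

end

theory Submission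
  imports Defs
begin

text \<open>Conditioning on the distance R, which is independent of the interferers and of the fading,
  reduces the claim to the coverage probability at a fixed distance r.  Given the interferer
  positions y, the gains are independent Exp(1) variables, so the useful gain exceeds
  \<gamma> r^\<alpha> (\<Sum>n h_n |y_n|^(-\<alpha>) + \<sigma>^2 / P) with probability
  exp (- \<gamma> r^\<alpha> \<sigma>^2 / P) \<Prod>n 1 / (1 + \<gamma> r^\<alpha> |y_n|^(-\<alpha>)), independently in each of
  the l symbol groups.  The l-th power of this product is exp (- \<Sum>n \<psi> |y_n|) with
  \<psi> t = l ln (1 + \<gamma> r^\<alpha> t^(-\<alpha>)), and the Laplace functional of the Poisson process,
  E exp (- \<Sum>n \<psi> |y_n|) = exp (- 2 \<pi> \<mu> \<integral>[D, \<infinity>) (1 - exp (- \<psi> t)) t dt), turns it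
  into exp (- 2 \<pi> \<mu> F_i r).  The Laplace functional is first computed for step functions that
  are constant on thin annuli, where the point counts are independent Poisson variables, and
  then extended to \<psi> by dominated convergence; \<alpha> > 2 makes the interference finite almost
  surely.\<close>

section \<open>Independence and conditioning\<close>

lemma (in prob_space) indep_var_eq_vimage_algebra:
  "indep_var S X T Y \<longleftrightarrow> random_variable S X \<and> random_variable T Y \<and>
     indep_set (sets (vimage_algebra (space M) X S)) (sets (vimage_algebra (space M) Y T))"
  unfolding indep_var_eq sets_vimage_algebra by blast

lemma (in prob_space) indep_set_vimage_distr_pair:
  assumes X[measurable]: "random_variable S X" and Y[measurable]: "random_variable T Y"
    and ind: "indep_set (sets (vimage_algebra (space M) X S)) (sets (vimage_algebra (space M) Y T))"
  shows "distr M S X \<Otimes>\<^sub>M distr M T Y = distr M (S \<Otimes>\<^sub>M T) (\<lambda>\<omega>. (X \<omega>, Y \<omega>))"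
proof -
  interpret PX: prob_space "distr M S X" by (rule prob_space_distr) simp
  interpret PY: prob_space "distr M T Y" by (rule prob_space_distr) simp
  show ?thesis
  proof (rule pair_measure_eqI)
    fix A B assume A: "A \<in> sets (distr M S X)" and B: "B \<in> sets (distr M T Y)"
    have "(\<lambda>\<omega>. (X \<omega>, Y \<omega>)) -` (A \<times> B) \<inter> space M = (X -` A \<inter> space M) \<inter> (Y -` B \<inter> space M)"
      by auto
    moreover have "X -` A \<inter> space M \<in> sets (vimage_algebra (space M) X S)"
      and "Y -` B \<inter> space M \<in> sets (vimage_algebra (space M) Y T)"
      using A B by (auto intro: in_vimage_algebra)
    ultimately show "emeasure (distr M S X) A * emeasure (distr M T Y) B
        = emeasure (distr M (S \<Otimes>\<^sub>M T) (\<lambda>\<omega>. (X \<omega>, Y \<omega>))) (A \<times> B)"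
      using A B indep_setD[OF ind]
      by (simp add: emeasure_distr emeasure_eq_measure ennreal_mult[symmetric])
  qed (simp_all add: PX.sigma_finite_measure PY.sigma_finite_measure)
qed

lemma (in prob_space) indep_set_vimage_integral_iterated:
  fixes f :: "'b \<times> 'c \<Rightarrow> real"
  assumes X[measurable]: "random_variable S X" and Y[measurable]: "random_variable T Y"
    and ind: "indep_set (sets (vimage_algebra (space M) X S)) (sets (vimage_algebra (space M) Y T))"
    and f[measurable]: "f \<in> borel_measurable (S \<Otimes>\<^sub>M T)"
    and int: "integrable M (\<lambda>\<omega>. f (X \<omega>, Y \<omega>))"
  shows "(\<integral>\<omega>. f (X \<omega>, Y \<omega>) \<partial>M) = (\<integral>\<omega>. (\<integral>\<omega>'. f (X \<omega>, Y \<omega>') \<partial>M) \<partial>M)"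
proof -
  note joint = indep_set_vimage_distr_pair[OF X Y ind]
  interpret PX: prob_space "distr M S X" by (rule prob_space_distr) simp
  interpret PY: prob_space "distr M T Y" by (rule prob_space_distr) simp
  interpret XY: pair_prob_space "distr M S X" "distr M T Y" ..
  have "integrable (distr M S X \<Otimes>\<^sub>M distr M T Y) f"
    unfolding joint using int by (subst integrable_distr_eq) auto
  then have "integral\<^sup>L (distr M S X \<Otimes>\<^sub>M distr M T Y) f
      = (\<integral>x. (\<integral>y. f (x, y) \<partial>distr M T Y) \<partial>distr M S X)"
    by (rule XY.integral_fst'[symmetric])
  then have "(\<integral>\<omega>. f (X \<omega>, Y \<omega>) \<partial>M) = (\<integral>x. (\<integral>y. f (x, y) \<partial>distr M T Y) \<partial>distr M S X)"
    unfolding joint by (simp add: integral_distr)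
  also have "\<dots> = (\<integral>x. (\<integral>\<omega>'. f (x, Y \<omega>') \<partial>M) \<partial>distr M S X)"
    by (intro Bochner_Integration.integral_cong refl) (simp add: integral_distr)
  finally show ?thesis
    by (simp add: integral_distr)
qed

lemma integral_of_bool_eq_measure: "(\<integral>x. of_bool (Q x) \<partial>M) = measure M {x\<in>space M. Q x}"
proof -
  have "(\<integral>x. of_bool (Q x) \<partial>M) = (\<integral>x. indicator {x\<in>space M. Q x} x \<partial>M)"
    by (rule Bochner_Integration.integral_cong) (auto simp: indicator_def)
  also have "\<dots> = measure M ({x\<in>space M. Q x} \<inter> space M)"
    by (rule Bochner_Integration.integral_indicator)
  finally show ?thesis
    by (simp add: Int_absorb2)
qed

lemma prod_of_bool: "finite A \<Longrightarrow> (\<Prod>x\<in>A. of_bool (P x) :: 'b :: comm_semiring_1) = of_bool (\<forall>x\<in>A. P x)"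
  by (induction A rule: finite_induct) auto

lemma AE_summable_if_nn_integral_suminf_finite:
  fixes f :: "nat \<Rightarrow> 'a \<Rightarrow> real"
  assumes [measurable]: "\<And>n. f n \<in> borel_measurable M"
    and nonneg: "AE x in M. \<forall>n. 0 \<le> f n x"
    and finite: "(\<integral>\<^sup>+x. (\<Sum>n. ennreal (f n x)) \<partial>M) \<noteq> \<infinity>"
  shows "AE x in M. summable (\<lambda>n. f n x)"
proof -
  have "AE x in M. (\<Sum>n. ennreal (f n x)) \<noteq> \<infinity>"
    by (rule nn_integral_PInf_AE[OF _ finite]) measurable
  then show ?thesis
    using nonneg by eventually_elim (auto intro: summable_suminf_not_top)
qed

section \<open>Exponential and Poisson random variables\<close>

lemma (in prob_space) distributed_lborel_prob_singleton:
  assumes "distributed M lborel X f"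
  shows "\<P>(x in M. X x = w) = 0"
proof -
  have [measurable]: "f \<in> borel_measurable lborel"
    using distributed_borel_measurable[OF assms] .
  have "emeasure M (X -` {w} \<inter> space M) = (\<integral>\<^sup>+x. f x * indicator {w} x \<partial>lborel)"
    using distributed_emeasure[OF assms] by simp
  also have "\<dots> = 0"
    using AE_lborel_singleton[of w] by (subst nn_integral_0_iff_AE) (auto elim!: eventually_mono)
  finally show ?thesis
    by (simp add: measure_def vimage_def Int_def conj_commute)
qed

lemma (in prob_space) exponential_distributedD_ge:
  assumes D: "distributed M lborel X (exponential_density l)" and a: "0 \<le> a" and l: "0 < l"
  shows "\<P>(x in M. a \<le> X x) = exp (- a * l)"
proof -
  have [measurable]: "X \<in> borel_measurable M"
    using distributed_measurable[OF D] by (simp add: measurable_lborel2)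
  have "{x\<in>space M. a \<le> X x} = {x\<in>space M. a < X x} \<union> {x\<in>space M. X x = a}"
    by auto
  moreover have "\<P>(x in M. a < X x) + \<P>(x in M. X x = a)
      = measure M ({x\<in>space M. a < X x} \<union> {x\<in>space M. X x = a})"
    by (rule finite_measure_Union[symmetric]) auto
  ultimately have "\<P>(x in M. a \<le> X x) = \<P>(x in M. a < X x) + \<P>(x in M. X x = a)"
    by simp
  then show ?thesis
    using exponential_distributedD_gt[OF D a l] distributed_lborel_prob_singleton[OF D] by simp
qed

lemma (in prob_space) exponential_distributed_AE_pos:
  assumes D: "distributed M lborel X (exponential_density l)" and l: "0 < l"
  shows "AE x in M. 0 < X x"
proof -
  have [measurable]: "X \<in> borel_measurable M"
    using distributed_measurable[OF D] by (simp add: measurable_lborel2)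
  have "\<P>(x in M. X x \<le> 0) = 0"
    using exponential_distributedD_le[OF D _ l, of 0] by simp
  then have "AE x in M. \<not> X x \<le> 0"
    by (intro AE_I[where N="{x\<in>space M. X x \<le> 0}"]) (auto simp: emeasure_eq_measure)
  then show ?thesis by (simp add: not_le)
qed

lemma (in prob_space) exponential_distributed_laplace:
  assumes D: "distributed M lborel X (exponential_density l)" and l: "0 < l" and s: "0 \<le> s"
  shows "expectation (\<lambda>x. exp (- (s * X x))) = l / (l + s)"
proof -
  have [measurable]: "X \<in> borel_measurable M"
    using distributed_measurable[OF D] by (simp add: measurable_lborel2)
  have "(\<integral>\<^sup>+x. ennreal (exp (- (s * X x))) \<partial>M)
      = (\<integral>\<^sup>+x. ennreal (exponential_density l x) * ennreal (exp (- (s * x))) \<partial>lborel)"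
    by (rule distributed_nn_integral[OF D, symmetric]) simp
  also have "\<dots> = (\<integral>\<^sup>+x. ennreal (l / (l + s)) * ennreal (exponential_density (l + s) x) \<partial>lborel)"
    \<comment> \<open>the integrand is a multiple of the exponential density of rate l + s\<close>
  proof (rule nn_integral_cong)
    fix x :: real
    have "l * exp (- x * l) * exp (- (s * x)) = l / (l + s) * ((l + s) * exp (- x * (l + s)))"
      using l s by (simp add: exp_add[symmetric] field_simps)
    then show "ennreal (exponential_density l x) * ennreal (exp (- (s * x)))
        = ennreal (l / (l + s)) * ennreal (exponential_density (l + s) x)"
      using l s by (auto simp: exponential_density_def ennreal_mult[symmetric])
  qed
  also have "\<dots> = ennreal (l / (l + s)) * emeasure (density lborel (exponential_density (l + s))) UNIV"
    by (simp add: nn_integral_cmult emeasure_density)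
  also have "emeasure (density lborel (exponential_density (l + s))) UNIV = 1"
    using prob_space.emeasure_space_1[OF prob_space_exponential_density, of "l + s"] l s by simp
  finally show ?thesis
    using l s by (subst integral_eq_nn_integral) auto
qed

lemma (in prob_space) exponential_distributed_nn_integral:
  assumes D: "distributed M lborel X (exponential_density l)" and l: "0 < l"
  shows "(\<integral>\<^sup>+x. ennreal (X x) \<partial>M) = ennreal (1 / l)"
proof -
  have "(\<integral>\<^sup>+x. ennreal (X x) \<partial>M) = (\<integral>\<^sup>+x. ennreal (exponential_density l x * x ^ 1) \<partial>lborel)"
    by (subst distributed_nn_integral[OF D, symmetric])
       (use l in \<open>auto intro!: nn_integral_cong simp: ennreal_mult[symmetric] exponential_density_def\<close>)
  also have "\<dots> = ennreal (1 / l)"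
    using nn_integral_erlang_ith_moment[OF l, of 0 1] by simp
  finally show ?thesis .
qed

lemma (in prob_space) prob_le_exponential_indep:
  assumes indep: "indep_var borel X borel H"
    and H: "distributed M lborel H (exponential_density l)" and l: "0 < l"
    and X_nonneg: "AE \<omega> in M. 0 \<le> X \<omega>"
  shows "\<P>(\<omega> in M. X \<omega> \<le> H \<omega>) = expectation (\<lambda>\<omega>. exp (- X \<omega> * l))"
proof -
  have X[measurable]: "X \<in> borel_measurable M" and H_meas[measurable]: "H \<in> borel_measurable M"
    using indep_var_rv1[OF indep] indep_var_rv2[OF indep] by auto
  have ind: "indep_set (sets (vimage_algebra (space M) X borel)) (sets (vimage_algebra (space M) H borel))"
    using indep by (simp add: indep_var_eq_vimage_algebra)
  have "\<P>(\<omega> in M. X \<omega> \<le> H \<omega>) = (\<integral>\<omega>. (\<lambda>(x, y). of_bool (x \<le> y) :: real) (X \<omega>, H \<omega>) \<partial>M)"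
    by (simp add: integral_of_bool_eq_measure)
  also have "\<dots> = (\<integral>\<omega>. (\<integral>\<omega>'. of_bool (X \<omega> \<le> H \<omega>') \<partial>M) \<partial>M)"
    by (subst indep_set_vimage_integral_iterated[OF X H_meas ind])
       (auto intro!: integrable_const_bound[where B=1])
  also have "\<dots> = expectation (\<lambda>\<omega>. exp (- X \<omega> * l))"
    using X_nonneg
    by (intro integral_cong_AE) (auto elim!: eventually_mono
        simp: integral_of_bool_eq_measure exponential_distributedD_ge[OF H _ l])
  finally show ?thesis .
qed

lemma nn_integral_nat_valued:
  fixes X :: "'a \<Rightarrow> nat"
  assumes X: "X \<in> M \<rightarrow>\<^sub>M count_space UNIV"
  shows "(\<integral>\<^sup>+x. g (X x) \<partial>M) = (\<Sum>m. g m * emeasure M {x\<in>space M. X x = m})"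
proof -
  have [measurable]: "{x\<in>space M. X x = m} \<in> sets M" for m
    using measurable_sets[OF X, of "{m}"] by (simp add: vimage_def Int_def conj_commute)
  have "(\<integral>\<^sup>+x. g (X x) \<partial>M) = (\<integral>\<^sup>+x. (\<Sum>m. g m * indicator {x\<in>space M. X x = m} x) \<partial>M)"
  proof (rule nn_integral_cong)
    fix x assume "x \<in> space M"
    then have "(\<Sum>m. g m * indicator {x\<in>space M. X x = m} x) = (\<Sum>m\<in>{X x}. g m * indicator {x\<in>space M. X x = m} x)"
      by (intro suminf_finite) (auto simp: indicator_def)
    with \<open>x \<in> space M\<close> show "g (X x) = (\<Sum>m. g m * indicator {x\<in>space M. X x = m} x)"
      by simp
  qed
  also have "\<dots> = (\<Sum>m. g m * emeasure M {x\<in>space M. X x = m})"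
    by (subst nn_integral_suminf) (simp_all add: nn_integral_cmult_indicator)
  finally show ?thesis .
qed

lemma poisson_laplace_sums:
  fixes \<nu> v :: real
  shows "(\<lambda>m. exp (- (v * real m)) * (\<nu> ^ m / fact m * exp (- \<nu>))) sums exp (- (\<nu> * (1 - exp (- v))))"
proof -
  have "(\<lambda>m. exp (- \<nu>) * ((\<nu> * exp (- v)) ^ m /\<^sub>R fact m)) sums (exp (- \<nu>) * exp (\<nu> * exp (- v)))"
    by (intro sums_mult exp_converges)
  moreover have "exp (- \<nu>) * exp (\<nu> * exp (- v)) = exp (- (\<nu> * (1 - exp (- v))))"
    by (simp add: exp_add[symmetric] algebra_simps)
  moreover have "exp (- \<nu>) * ((\<nu> * exp (- v)) ^ m /\<^sub>R fact m) = exp (- (v * real m)) * (\<nu> ^ m / fact m * exp (- \<nu>))" for m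
    by (simp add: power_mult_distrib exp_of_nat_mult[symmetric] divide_inverse mult_ac)
  ultimately show ?thesis by simp
qed

lemma poisson_mean_sums:
  fixes \<nu> :: real
  shows "(\<lambda>m. real m * (\<nu> ^ m / fact m * exp (- \<nu>))) sums \<nu>"
proof -
  have "(\<lambda>m. \<nu> * exp (- \<nu>) * (\<nu> ^ m /\<^sub>R fact m)) sums (\<nu> * exp (- \<nu>) * exp \<nu>)"
    by (intro sums_mult exp_converges)
  moreover have "\<nu> * exp (- \<nu>) * exp \<nu> = \<nu>"
    by (simp add: mult.assoc exp_add[symmetric])
  moreover have "real (Suc m) * (\<nu> ^ Suc m / fact (Suc m) * exp (- \<nu>)) = \<nu> * exp (- \<nu>) * (\<nu> ^ m /\<^sub>R fact m)" for m
    by (simp add: fact_Suc divide_simps del: of_nat_Suc)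
  ultimately have "(\<lambda>m. real (Suc m) * (\<nu> ^ Suc m / fact (Suc m) * exp (- \<nu>))) sums \<nu>"
    by simp
  from this[unfolded sums_Suc_iff[where f="\<lambda>m. real m * (\<nu> ^ m / fact m * exp (- \<nu>))"]]
  show ?thesis by simp
qed

section \<open>Annuli and step-function approximation\<close>

definition annulus :: "real \<Rightarrow> real \<Rightarrow> complex set" where
  "annulus a b = {z. a \<le> cmod z \<and> cmod z < b}"

lemma annulus_sets[measurable]: "annulus a b \<in> sets borel"
  unfolding annulus_def by measurable

lemma bounded_annulus: "bounded (annulus a b)"
  unfolding annulus_def bounded_iff by (intro exI[of _ b]) auto

lemma measure_annulus:
  assumes "0 \<le> a" "a \<le> b"
  shows "measure lborel (annulus a b) = pi * (b\<^sup>2 - a\<^sup>2)"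
proof -
  have ball: "emeasure lborel (ball (0::complex) r) = ennreal (pi * r\<^sup>2)" if "0 \<le> r" for r
    using emeasure_ball[of r "0::complex"] that by (simp add: unit_ball_vol_2 mult.commute)
  have "annulus a b = ball 0 b - ball 0 a"
    using assms by (auto simp: annulus_def)
  moreover have "measure lborel (ball (0::complex) b - ball 0 a)
      = measure lborel (ball (0::complex) b) - measure lborel (ball (0::complex) a)"
    using assms ball[of b] by (intro measure_Diff) auto
  ultimately show ?thesis
    using assms ball[of a] ball[of b] by (simp add: measure_def right_diff_distrib)
qed

lemma suminf_comm_ennreal:
  fixes g :: "nat \<Rightarrow> nat \<Rightarrow> ennreal"
  shows "(\<Sum>n. \<Sum>k. g n k) = (\<Sum>k. \<Sum>n. g n k)"
proof -
  have "(\<Sum>n. \<Sum>k. g n k) = (\<integral>\<^sup>+n. (\<Sum>k. g n k) \<partial>count_space UNIV)"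
    by (simp add: nn_integral_count_space_nat)
  also have "\<dots> = (\<Sum>k. \<integral>\<^sup>+n. g n k \<partial>count_space UNIV)"
    by (rule nn_integral_suminf) simp
  finally show ?thesis
    by (simp add: nn_integral_count_space_nat)
qed

lemma suminf_powr_le_shell_counts:
  fixes y :: "nat \<Rightarrow> complex" and \<alpha> D :: real
  assumes \<alpha>: "0 \<le> \<alpha>" and D: "0 < D" and y: "\<And>n. D \<le> cmod (y n)"
    and finite: "\<And>k. finite {n. y n \<in> annulus (D + real k) (D + real k + 1)}"
  shows "(\<Sum>n. ennreal (cmod (y n) powr (-\<alpha>)))
       \<le> (\<Sum>k. ennreal ((D + real k) powr (-\<alpha>)) * of_nat (card {n. y n \<in> annulus (D + real k) (D + real k + 1)}))"
proof -
  let ?c = "\<lambda>k::nat. ennreal ((D + real k) powr (-\<alpha>))"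
  let ?N = "\<lambda>k::nat. {n. y n \<in> annulus (D + real k) (D + real k + 1)}"
  have "ennreal (cmod (y n) powr (-\<alpha>)) \<le> (\<Sum>j. ?c j * indicator (?N j) n)" for n
  proof -
    define k where "k = nat \<lfloor>cmod (y n) - D\<rfloor>"
    have k: "D + real k \<le> cmod (y n)" "cmod (y n) < D + real k + 1"
      using y[of n] unfolding k_def by linarith+
    then have "ennreal (cmod (y n) powr (-\<alpha>)) \<le> (\<Sum>j\<in>{k}. ?c j * indicator (?N j) n)"
      using D \<alpha> by (auto simp: annulus_def intro!: ennreal_leI powr_mono2')
    also have "\<dots> \<le> (\<Sum>j. ?c j * indicator (?N j) n)"
      by (rule sum_le_suminf) auto
    finally show ?thesis .
  qed
  then have "(\<Sum>n. ennreal (cmod (y n) powr (-\<alpha>))) \<le> (\<Sum>n. \<Sum>j. ?c j * indicator (?N j) n)"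
    by (intro suminf_le) auto
  also have "\<dots> = (\<Sum>j. \<Sum>n. ?c j * indicator (?N j) n)"
    by (rule suminf_comm_ennreal)
  also have "\<dots> = (\<Sum>j. ?c j * of_nat (card (?N j)))"
  proof (intro arg_cong[where f=suminf] ext)
    fix j
    have "(\<Sum>n. ?c j * indicator (?N j) n) = (\<Sum>n\<in>?N j. ?c j * indicator (?N j) n)"
      using finite by (intro suminf_finite) auto
    then show "(\<Sum>n. ?c j * indicator (?N j) n) = ?c j * of_nat (card (?N j))"
      by (simp add: mult.commute)
  qed
  finally show ?thesis .
qed

lemma summable_shifted_powr:
  assumes "s < -1" "0 < d"
  shows "summable (\<lambda>k::nat. (d + real k) powr s)"
proof (rule summable_comparison_test_ev)
  show "summable (\<lambda>k::nat. real k powr s)"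
    using assms by (simp add: summable_real_powr_iff)
  show "\<forall>\<^sub>F k in sequentially. norm ((d + real k) powr s) \<le> real k powr s"
    using eventually_gt_at_top[of "0::nat"]
    by eventually_elim (use assms in \<open>auto intro!: powr_mono2'\<close>)
qed

lemma summable_shell_weights:
  fixes \<alpha> D :: real
  assumes \<alpha>: "2 < \<alpha>" and D: "0 < D"
  shows "summable (\<lambda>k::nat. (D + real k) powr (-\<alpha>) * ((D + real k + 1)\<^sup>2 - (D + real k)\<^sup>2))"
proof (rule summable_comparison_test)
  show "summable (\<lambda>k::nat. (2 + 1 / D) * (D + real k) powr (1 - \<alpha>))"
    using \<alpha> D by (intro summable_mult summable_shifted_powr) auto
  show "\<exists>N. \<forall>k\<ge>N. norm ((D + real k) powr (-\<alpha>) * ((D + real k + 1)\<^sup>2 - (D + real k)\<^sup>2))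
      \<le> (2 + 1 / D) * (D + real k) powr (1 - \<alpha>)"
  proof (intro exI allI impI)
    fix k :: nat
    have d: "0 < D + real k" using D by simp
    have "(D + real k + 1)\<^sup>2 - (D + real k)\<^sup>2 = 2 * (D + real k) + 1"
      by (simp add: power2_eq_square algebra_simps)
    also have "\<dots> \<le> (2 + 1 / D) * (D + real k)"
      using D by (simp add: field_simps)
    finally have "(D + real k) powr (-\<alpha>) * ((D + real k + 1)\<^sup>2 - (D + real k)\<^sup>2)
        \<le> (D + real k) powr (-\<alpha>) * ((2 + 1 / D) * (D + real k))"
      by (intro mult_left_mono) auto
    also have "\<dots> = (2 + 1 / D) * (D + real k) powr (1 - \<alpha>)"
      using d by (simp add: powr_mult_base mult_ac)
    finally show "norm ((D + real k) powr (-\<alpha>) * ((D + real k + 1)\<^sup>2 - (D + real k)\<^sup>2))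
        \<le> (2 + 1 / D) * (D + real k) powr (1 - \<alpha>)"
      using d by (simp add: abs_mult power_strict_mono)
  qed
qed

lemma set_integrable_powr_atLeast:
  fixes d s :: real
  assumes d: "0 < d" and s: "s < -1"
  shows "set_integrable lborel {d..} (\<lambda>t. t powr s)"
proof -
  let ?F = "\<lambda>t::real. t powr (s + 1) / (s + 1)"
  have "set_integrable lborel (einterval (ereal (d / 2)) \<infinity>) (\<lambda>t. t powr s)"
  proof (rule interval_integral_FTC_nonneg(1)[where F="?F" and A="?F (d / 2)" and B=0])
    fix x assume "ereal (d / 2) < ereal x" "ereal x < \<infinity>"
    then have x: "0 < x" using d by simp
    have "(?F has_real_derivative ((s + 1) * x powr (s + 1 - 1)) / (s + 1)) (at x)"
      by (intro DERIV_cdivide has_real_derivative_powr x)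
    then show "(?F has_real_derivative x powr s) (at x)"
      using s by simp
    show "isCont (\<lambda>t. t powr s) x"
      using x by (intro continuous_intros) auto
  next
    have "(?F \<longlongrightarrow> ?F (d / 2)) (at_right (d / 2))"
      using d s by (intro tendsto_intros) auto
    then show "((?F \<circ> real_of_ereal) \<longlongrightarrow> ?F (d / 2)) (at_right (ereal (d / 2)))"
      by (simp add: ereal_tendsto_simps)
  next
    have "((\<lambda>t. t powr (s + 1)) \<longlongrightarrow> 0) at_top"
      using s by (intro tendsto_neg_powr filterlim_ident) auto
    then show "((?F \<circ> real_of_ereal) \<longlongrightarrow> 0) (at_left \<infinity>)"
      by (simp add: ereal_tendsto_simps tendsto_divide_zero)
  qed auto
  then show ?thesis
    by (rule set_integrable_subset) (use d in \<open>auto simp: einterval_def\<close>)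
qed

lemma
  fixes a b :: real
  assumes "a \<le> b"
  shows integral_ident_Ico: "(\<integral>t. t * indicator {a..<b} t \<partial>lborel) = (b\<^sup>2 - a\<^sup>2) / 2"
    and integrable_ident_Ico: "integrable lborel (\<lambda>t. t * indicator {a..<b} t)"
proof -
  have ae: "AE t in lborel. t * indicator {a..<b} t = indicator {a..b} t *\<^sub>R t"
    using AE_lborel_singleton[of b] by eventually_elim (auto split: split_indicator)
  have "(\<integral>t. indicator {a..b} t *\<^sub>R t \<partial>lborel) = b\<^sup>2 / 2 - a\<^sup>2 / 2"
  proof (rule integral_FTC_atLeastAtMost[OF assms])
    fix x
    have "((\<lambda>t. t\<^sup>2 / 2) has_real_derivative x) (at x within {a..b})"
      by (auto intro!: derivative_eq_intros simp: power2_eq_square)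
    then show "((\<lambda>t. t\<^sup>2 / 2) has_vector_derivative x) (at x within {a..b})"
      by (simp add: has_real_derivative_iff_has_vector_derivative)
  qed (intro continuous_intros)
  then show "(\<integral>t. t * indicator {a..<b} t \<partial>lborel) = (b\<^sup>2 - a\<^sup>2) / 2"
    using integral_cong_AE[OF _ _ ae] by (simp add: diff_divide_distrib)
  have "integrable lborel (\<lambda>t. indicator {a..b} t *\<^sub>R t)"
    using borel_integrable_atLeastAtMost[of a b "\<lambda>t. t"] by (simp add: mult.commute)
  then show "integrable lborel (\<lambda>t. t * indicator {a..<b} t)"
    using integrable_cong_AE[OF _ _ ae] by simp
qed

definition grid_point :: "real \<Rightarrow> nat \<Rightarrow> nat \<Rightarrow> real" where
  "grid_point D m j = D + real j / real (Suc m)"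

definition grid_cell :: "real \<Rightarrow> nat \<Rightarrow> nat \<Rightarrow> real set" where
  "grid_cell D m j = {grid_point D m j ..< grid_point D m (Suc j)}"

definition grid_index :: "real \<Rightarrow> nat \<Rightarrow> real \<Rightarrow> nat" where
  "grid_index D m t = nat \<lfloor>(t - D) * real (Suc m)\<rfloor>"

lemma grid_point_ge [simp]: "D \<le> grid_point D m j"
  by (simp add: grid_point_def)

lemma grid_point_mono: "j \<le> k \<Longrightarrow> grid_point D m j \<le> grid_point D m k"
  by (simp add: grid_point_def divide_right_mono)

lemma grid_point_Suc: "grid_point D m (Suc j) = grid_point D m j + 1 / real (Suc m)"
  by (simp add: grid_point_def add_divide_distrib)

lemma grid_point_le:
  assumes "j \<le> m * Suc m"
  shows "grid_point D m j \<le> D + real m"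
proof -
  have "real j \<le> real m * real (Suc m)"
    using assms by (metis of_nat_le_iff of_nat_mult)
  then show ?thesis
    by (simp add: grid_point_def divide_le_eq)
qed

lemma grid_cell_iff: "t \<in> grid_cell D m j \<longleftrightarrow> D \<le> t \<and> j = grid_index D m t"
proof -
  have "t \<in> grid_cell D m j \<longleftrightarrow> real j \<le> (t - D) * real (Suc m) \<and> (t - D) * real (Suc m) < real j + 1"
    unfolding grid_cell_def grid_point_def by (auto simp: field_simps)
  also have "\<dots> \<longleftrightarrow> 0 \<le> (t - D) * real (Suc m) \<and> \<lfloor>(t - D) * real (Suc m)\<rfloor> = int j"
    by (auto simp: floor_eq_iff)
  also have "\<dots> \<longleftrightarrow> D \<le> t \<and> j = grid_index D m t"
    by (auto simp: grid_index_def zero_le_mult_iff)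
  finally show ?thesis .
qed

lemma grid_index_less:
  assumes "D \<le> t" "t < D + real m"
  shows "grid_index D m t < m * Suc m"
proof -
  have "(t - D) * real (Suc m) < real m * real (Suc m)"
    using assms by (intro mult_strict_right_mono) auto
  then have "(t - D) * real (Suc m) < of_int (int (m * Suc m))"
    by (metis of_int_of_nat_eq of_nat_mult)
  then show ?thesis
    using assms unfolding grid_index_def by (simp add: floor_less_iff nat_less_iff)
qed

lemma grid_cell_right_end:
  assumes "t \<in> grid_cell D m j"
  shows "t < grid_point D m (Suc j)" "grid_point D m (Suc j) \<le> t + 1 / real (Suc m)"
  using assms by (auto simp: grid_cell_def grid_point_Suc)

lemma sum_grid_cell_indicator:
  "(\<Sum>j<m * Suc m. f j * indicator (grid_cell D m j) t)
     = (if D \<le> t \<and> grid_index D m t < m * Suc m then f (grid_index D m t) else (0::real))"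
proof -
  have "(\<Sum>j<m * Suc m. f j * indicator (grid_cell D m j) t)
      = (\<Sum>j<m * Suc m. if j = grid_index D m t then (if D \<le> t then f j else 0) else 0)"
    by (intro sum.cong refl) (auto simp: indicator_def grid_cell_iff)
  then show ?thesis
    by simp
qed

text \<open>Sampling at right end points puts step_approx \<psi> D m below a decreasing \<psi>.  In the plane
  its steps are thin annuli, on which the counts of a Poisson process are independent Poisson
  variables.\<close>

definition step_approx :: "(real \<Rightarrow> real) \<Rightarrow> real \<Rightarrow> nat \<Rightarrow> real \<Rightarrow> real" where
  "step_approx \<psi> D m t = (\<Sum>j<m * Suc m. \<psi> (grid_point D m (Suc j)) * indicator (grid_cell D m j) t)"

lemma step_approx_measurable [measurable]: "step_approx \<psi> D m \<in> borel_measurable borel"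
  unfolding step_approx_def grid_cell_def by measurable

lemma step_approx_eq:
  "step_approx \<psi> D m t =
     (if D \<le> t \<and> grid_index D m t < m * Suc m then \<psi> (grid_point D m (Suc (grid_index D m t))) else 0)"
  unfolding step_approx_def by (rule sum_grid_cell_indicator)

lemma step_approx_nonneg:
  assumes "\<And>t. D \<le> t \<Longrightarrow> 0 \<le> \<psi> t"
  shows "0 \<le> step_approx \<psi> D m t"
  using assms by (simp add: step_approx_eq)

lemma step_approx_le:
  assumes nonneg: "\<And>t. D \<le> t \<Longrightarrow> 0 \<le> \<psi> t"
    and antimono: "\<And>s t. D \<le> s \<Longrightarrow> s \<le> t \<Longrightarrow> \<psi> t \<le> \<psi> s"
    and t: "D \<le> t"
  shows "step_approx \<psi> D m t \<le> \<psi> t"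
proof -
  have "t < grid_point D m (Suc (grid_index D m t))"
    using t by (intro grid_cell_right_end(1)) (simp add: grid_cell_iff)
  then show ?thesis
    using antimono[OF t] nonneg[OF t] by (simp add: step_approx_eq)
qed

lemma step_approx_tendsto:
  assumes cont: "continuous_on {D..} \<psi>" and t: "D \<le> t"
  shows "(\<lambda>m. step_approx \<psi> D m t) \<longlonglongrightarrow> \<psi> t"
proof -
  define r where "r m = grid_point D m (Suc (grid_index D m t))" for m
  have r: "t < r m" "r m \<le> t + 1 / real (Suc m)" for m
    using grid_cell_right_end[of t D m "grid_index D m t"] t by (simp_all add: r_def grid_cell_iff)
  have "(\<lambda>m. t + 1 / real (Suc m)) \<longlonglongrightarrow> t"
    using tendsto_add[OF tendsto_const LIMSEQ_Suc[OF lim_const_over_n], of t 1] by simp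
  moreover have "\<forall>\<^sub>F m in sequentially. t \<le> r m" "\<forall>\<^sub>F m in sequentially. r m \<le> t + 1 / real (Suc m)"
    using r by (auto intro: always_eventually less_imp_le)
  ultimately have r_lim: "r \<longlonglongrightarrow> t"
    by (rule tendsto_sandwich[OF _ _ tendsto_const, rotated 2])
  have "\<forall>\<^sub>F m in sequentially. r m \<in> {D..}"
    by (intro always_eventually allI) (simp add: r_def)
  then have "(\<lambda>m. \<psi> (r m)) \<longlonglongrightarrow> \<psi> t"
    using t by (intro continuous_on_tendsto_compose[OF cont r_lim]) simp_all
  moreover obtain N :: nat where "t - D < real N"
    using reals_Archimedean2 by blast
  then have "\<forall>\<^sub>F m in sequentially. \<psi> (r m) = step_approx \<psi> D m t"
  proof (intro eventually_sequentiallyI)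
    fix m assume "t - D < real N" "N \<le> m"
    then have "grid_index D m t < m * Suc m"
      using t by (intro grid_index_less) auto
    then show "\<psi> (r m) = step_approx \<psi> D m t"
      using t by (simp add: step_approx_eq r_def)
  qed
  ultimately show ?thesis
    by (rule Lim_transform_eventually)
qed

lemma integral_step_approx:
  "(LBINT t:{D..}. (1 - exp (- step_approx \<psi> D m t)) * t)
     = (\<Sum>j<m * Suc m. (1 - exp (- \<psi> (grid_point D m (Suc j))))
          * ((grid_point D m (Suc j))\<^sup>2 - (grid_point D m j)\<^sup>2) / 2)"
proof -
  let ?v = "\<lambda>j. 1 - exp (- \<psi> (grid_point D m (Suc j)))"
  have "indicator {D..} t *\<^sub>R ((1 - exp (- step_approx \<psi> D m t)) * t)
      = (\<Sum>j<m * Suc m. ?v j * (t * indicator (grid_cell D m j) t))" for t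
    using sum_grid_cell_indicator[where f="\<lambda>j. ?v j * t" and m=m and D=D and t=t]
    by (simp add: step_approx_eq indicator_def mult_ac)
  then have "(LBINT t:{D..}. (1 - exp (- step_approx \<psi> D m t)) * t)
      = (\<Sum>j<m * Suc m. \<integral>t. ?v j * (t * indicator (grid_cell D m j) t) \<partial>lborel)"
    unfolding set_lebesgue_integral_def
    by (simp add: grid_cell_def grid_point_mono integrable_ident_Ico)
  also have "\<dots> = (\<Sum>j<m * Suc m. ?v j * ((grid_point D m (Suc j))\<^sup>2 - (grid_point D m j)\<^sup>2) / 2)"
    by (simp add: grid_cell_def grid_point_mono integral_ident_Ico)
  finally show ?thesis .
qed

lemma integral_step_approx_tendsto:
  fixes \<alpha> K D :: real
  assumes D: "0 < D" and \<alpha>: "2 < \<alpha>"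
    and [measurable]: "\<psi> \<in> borel_measurable borel"
    and nonneg: "\<And>t. D \<le> t \<Longrightarrow> 0 \<le> \<psi> t"
    and antimono: "\<And>s t. D \<le> s \<Longrightarrow> s \<le> t \<Longrightarrow> \<psi> t \<le> \<psi> s"
    and cont: "continuous_on {D..} \<psi>"
    and bound: "\<And>t. D \<le> t \<Longrightarrow> \<psi> t \<le> K * t powr (-\<alpha>)"
  shows "(\<lambda>m. LBINT t:{D..}. (1 - exp (- step_approx \<psi> D m t)) * t)
           \<longlonglongrightarrow> (LBINT t:{D..}. (1 - exp (- \<psi> t)) * t)"
  unfolding set_lebesgue_integral_def
proof (rule integral_dominated_convergence[where w="\<lambda>t. K * (indicator {D..} t * t powr (1 - \<alpha>))"])
  show "integrable lborel (\<lambda>t. K * (indicator {D..} t * t powr (1 - \<alpha>)))"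
    using set_integrable_powr_atLeast[OF D, of "1 - \<alpha>"] \<alpha>
    by (intro integrable_mult_right) (simp add: set_integrable_def)
  show "AE t in lborel. (\<lambda>m. indicator {D..} t *\<^sub>R ((1 - exp (- step_approx \<psi> D m t)) * t))
      \<longlonglongrightarrow> indicator {D..} t *\<^sub>R ((1 - exp (- \<psi> t)) * t)"
    by (intro AE_I2) (auto intro!: tendsto_intros step_approx_tendsto[OF cont] split: split_indicator)
  fix m
  show "AE t in lborel. norm (indicator {D..} t *\<^sub>R ((1 - exp (- step_approx \<psi> D m t)) * t))
      \<le> K * (indicator {D..} t * t powr (1 - \<alpha>))"
  proof (intro AE_I2)
    fix t
    show "norm (indicator {D..} t *\<^sub>R ((1 - exp (- step_approx \<psi> D m t)) * t))
        \<le> K * (indicator {D..} t * t powr (1 - \<alpha>))"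
    proof (cases "D \<le> t")
      case True
      then have t: "0 < t" using D by simp
      have s: "0 \<le> step_approx \<psi> D m t" "step_approx \<psi> D m t \<le> \<psi> t"
        using step_approx_nonneg[OF nonneg] step_approx_le[OF nonneg antimono True] by auto
      have "(1 - exp (- step_approx \<psi> D m t)) * t \<le> step_approx \<psi> D m t * t"
        using exp_ge_add_one_self[of "- step_approx \<psi> D m t"] t by (intro mult_right_mono) auto
      also have "\<dots> \<le> K * t powr (- \<alpha>) * t"
        using s bound[OF True] t by (intro mult_right_mono) auto
      also have "\<dots> = K * (t * t powr (- \<alpha>))"
        by (simp add: mult_ac)
      also have "\<dots> = K * t powr (1 - \<alpha>)"
        using t by (simp add: powr_mult_base)
      finally show ?thesis
        using True s t by simp
    qed simp
  qed
qed measurable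

lemma suminf_step_approx_tendsto:
  fixes x :: "nat \<Rightarrow> real"
  assumes x: "\<And>n. D \<le> x n" and summable: "summable (\<lambda>n. \<psi> (x n))"
    and nonneg: "\<And>t. D \<le> t \<Longrightarrow> 0 \<le> \<psi> t"
    and antimono: "\<And>s t. D \<le> s \<Longrightarrow> s \<le> t \<Longrightarrow> \<psi> t \<le> \<psi> s"
    and cont: "continuous_on {D..} \<psi>"
  shows "(\<lambda>m. \<Sum>n. step_approx \<psi> D m (x n)) \<longlonglongrightarrow> (\<Sum>n. \<psi> (x n))"
proof -
  have "\<forall>\<^sub>F (n, m) in at_top \<times>\<^sub>F sequentially. norm (step_approx \<psi> D m (x n)) \<le> \<psi> (x n)"
  proof (rule always_eventually, clarify)
    fix n m
    show "norm (step_approx \<psi> D m (x n)) \<le> \<psi> (x n)"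
      using step_approx_nonneg[where m=m and t="x n", OF nonneg] step_approx_le[where m=m, OF nonneg antimono x[of n]]
      by simp
  qed
  then show ?thesis
    using tannerys_theorem[OF step_approx_tendsto[OF cont x] _ summable] by simp
qed

section \<open>The Laplace functional of a Poisson point process\<close>

locale poisson_point_process = prob_space M for M :: "'a measure" +
  fixes \<mu> :: real and S :: "complex set" and Y :: "nat \<Rightarrow> 'a \<Rightarrow> complex"
  assumes poisson: "poisson_pp M \<mu> S Y" and intensity_nonneg: "0 \<le> \<mu>"
begin

lemma points_measurable [measurable]: "Y n \<in> borel_measurable M"
  using poisson by (simp add: poisson_pp_def)

lemma points_measurable_PiM [measurable]: "(\<lambda>\<omega> n. Y n \<omega>) \<in> M \<rightarrow>\<^sub>M PiM UNIV (\<lambda>_. borel)"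
  by (rule measurable_PiM_single') auto

lemma AE_points_in: "AE \<omega> in M. \<forall>n. Y n \<omega> \<in> S"
  using poisson by (simp add: poisson_pp_def)

lemma AE_finite_points: "A \<in> sets borel \<Longrightarrow> bounded A \<Longrightarrow> AE \<omega> in M. finite {n. Y n \<omega> \<in> A}"
  using poisson by (simp add: poisson_pp_def)

lemma
  fixes k :: nat and A :: "nat \<Rightarrow> complex set"
  assumes "\<And>j. j < k \<Longrightarrow> A j \<in> sets borel \<and> A j \<subseteq> S \<and> bounded (A j)"
    and "disjoint_family_on A {..<k}"
  shows indep_vars_counts: "indep_vars (\<lambda>_. count_space UNIV) (\<lambda>j. pp_count Y (A j)) {..<k}"
    and prob_count_eq_multi: "j < k \<Longrightarrow> \<P>(\<omega> in M. pp_count Y (A j) \<omega> = m)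
          = (\<mu> * measure lborel (A j)) ^ m / fact m * exp (- (\<mu> * measure lborel (A j)))"
  using poisson[unfolded poisson_pp_def, THEN conjunct2, THEN conjunct2, THEN conjunct2,
      rule_format, of k A] assms by auto

lemma
  assumes "A \<in> sets borel" "A \<subseteq> S" "bounded A"
  shows count_measurable: "pp_count Y A \<in> M \<rightarrow>\<^sub>M count_space UNIV"
    and prob_count_eq: "\<P>(\<omega> in M. pp_count Y A \<omega> = m)
          = (\<mu> * measure lborel A) ^ m / fact m * exp (- (\<mu> * measure lborel A))"
proof -
  have "disjoint_family_on (\<lambda>_::nat. A) {..<1}"
    by (simp add: disjoint_family_on_def)
  note count = indep_vars_counts[OF _ this] prob_count_eq_multi[OF _ this]
  show "pp_count Y A \<in> M \<rightarrow>\<^sub>M count_space UNIV"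
    using count(1) assms unfolding indep_vars_def by auto
  show "\<P>(\<omega> in M. pp_count Y A \<omega> = m)
      = (\<mu> * measure lborel A) ^ m / fact m * exp (- (\<mu> * measure lborel A))"
    using count(2)[of 0] assms by auto
qed

lemma count_borel_measurable:
  fixes f :: "nat \<Rightarrow> 'b::topological_space"
  assumes "A \<in> sets borel" "A \<subseteq> S" "bounded A"
  shows "(\<lambda>\<omega>. f (pp_count Y A \<omega>)) \<in> borel_measurable M"
  using measurable_compose[OF count_measurable[OF assms] borel_measurable_count_space[of f]]
  by (simp add: comp_def)

lemma nn_integral_fun_count:
  assumes "A \<in> sets borel" "A \<subseteq> S" "bounded A"
  shows "(\<integral>\<^sup>+\<omega>. g (pp_count Y A \<omega>) \<partial>M)
       = (\<Sum>m. g m * ennreal ((\<mu> * measure lborel A) ^ m / fact m * exp (- (\<mu> * measure lborel A))))"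
  using nn_integral_nat_valued[OF count_measurable[OF assms], of g] prob_count_eq[OF assms]
  by (simp add: emeasure_eq_measure)

lemma integral_exp_count:
  assumes "A \<in> sets borel" "A \<subseteq> S" "bounded A" and v: "0 \<le> v"
  shows "(\<integral>\<omega>. exp (- (v * real (pp_count Y A \<omega>))) \<partial>M) = exp (- (\<mu> * measure lborel A * (1 - exp (- v))))"
proof -
  let ?\<nu> = "\<mu> * measure lborel A"
  have [measurable]: "pp_count Y A \<in> M \<rightarrow>\<^sub>M count_space UNIV"
    using count_measurable[OF assms(1-3)] .
  have "(\<integral>\<^sup>+\<omega>. ennreal (exp (- (v * real (pp_count Y A \<omega>)))) \<partial>M)
      = (\<Sum>m. ennreal (exp (- (v * real m))) * ennreal (?\<nu> ^ m / fact m * exp (- ?\<nu>)))"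
    by (rule nn_integral_fun_count[OF assms(1-3)])
  also have "\<dots> = (\<Sum>m. ennreal (exp (- (v * real m)) * (?\<nu> ^ m / fact m * exp (- ?\<nu>))))"
    by (intro arg_cong[where f=suminf] ext ennreal_mult'[symmetric]) simp
  also have "\<dots> = ennreal (exp (- (?\<nu> * (1 - exp (- v)))))"
    using intensity_nonneg poisson_laplace_sums by (intro suminf_ennreal_eq) auto
  finally show ?thesis
    by (subst integral_eq_nn_integral) auto
qed

lemma nn_integral_count_eq_intensity:
  assumes "A \<in> sets borel" "A \<subseteq> S" "bounded A"
  shows "(\<integral>\<^sup>+\<omega>. of_nat (pp_count Y A \<omega>) \<partial>M) = ennreal (\<mu> * measure lborel A)"
proof -
  let ?\<nu> = "\<mu> * measure lborel A"
  have "(\<integral>\<^sup>+\<omega>. of_nat (pp_count Y A \<omega>) \<partial>M)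
      = (\<Sum>m. of_nat m * ennreal (?\<nu> ^ m / fact m * exp (- ?\<nu>)))"
    by (rule nn_integral_fun_count[OF assms])
  also have "\<dots> = (\<Sum>m. ennreal (real m * (?\<nu> ^ m / fact m * exp (- ?\<nu>))))"
    by (intro arg_cong[where f=suminf] ext, subst ennreal_of_nat_eq_real_of_nat, rule ennreal_mult'[symmetric]) simp
  also have "\<dots> = ennreal ?\<nu>"
    using intensity_nonneg poisson_mean_sums by (intro suminf_ennreal_eq) auto
  finally show ?thesis .
qed

lemma integral_exp_sum_counts:
  fixes k :: nat and A :: "nat \<Rightarrow> complex set"
  assumes A: "\<And>j. j < k \<Longrightarrow> A j \<in> sets borel \<and> A j \<subseteq> S \<and> bounded (A j)"
    and disj: "disjoint_family_on A {..<k}"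
    and v: "\<And>j. j < k \<Longrightarrow> 0 \<le> v j"
  shows "(\<integral>\<omega>. exp (- (\<Sum>j<k. v j * real (pp_count Y (A j) \<omega>))) \<partial>M)
       = exp (- (\<Sum>j<k. \<mu> * measure lborel (A j) * (1 - exp (- v j))))"
proof -
  have [measurable]: "j < k \<Longrightarrow> pp_count Y (A j) \<in> M \<rightarrow>\<^sub>M count_space UNIV" for j
    using count_measurable A by blast
  have indep: "indep_vars (\<lambda>_. borel) (\<lambda>j \<omega>. exp (- (v j * real (pp_count Y (A j) \<omega>)))) {..<k}"
    by (rule indep_vars_compose2[OF indep_vars_counts[OF A disj]]) (auto intro!: borel_measurable_count_space)
  have "(\<integral>\<omega>. exp (- (\<Sum>j<k. v j * real (pp_count Y (A j) \<omega>))) \<partial>M)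
      = (\<integral>\<omega>. (\<Prod>j<k. exp (- (v j * real (pp_count Y (A j) \<omega>)))) \<partial>M)"
    by (simp add: exp_sum[symmetric] sum_negf)
  also have "\<dots> = (\<Prod>j<k. \<integral>\<omega>. exp (- (v j * real (pp_count Y (A j) \<omega>))) \<partial>M)"
    using v by (intro indep_vars_lebesgue_integral[OF _ indep] integrable_const_bound[where B=1]) auto
  also have "\<dots> = (\<Prod>j<k. exp (- (\<mu> * measure lborel (A j) * (1 - exp (- v j)))))"
    using A v by (intro prod.cong refl integral_exp_count) auto
  also have "\<dots> = exp (- (\<Sum>j<k. \<mu> * measure lborel (A j) * (1 - exp (- v j))))"
    by (simp add: exp_sum[symmetric] sum_negf)
  finally show ?thesis .
qed

end

locale exterior_poisson_point_process = poisson_point_process M \<mu> "{y. D \<le> cmod y}" Y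
  for M :: "'a measure" and \<mu> D :: real and Y :: "nat \<Rightarrow> 'a \<Rightarrow> complex" +
  assumes radius_pos: "0 < D"
begin

lemma annulus_admissible:
  "D \<le> a \<Longrightarrow> annulus a b \<in> sets borel \<and> annulus a b \<subseteq> {y. D \<le> cmod y} \<and> bounded (annulus a b)"
  using bounded_annulus[of a b] by (auto simp: annulus_def)

lemma AE_summable_powr:
  fixes \<alpha> :: real
  assumes \<alpha>: "2 < \<alpha>"
  shows "AE \<omega> in M. summable (\<lambda>n. cmod (Y n \<omega>) powr (-\<alpha>))"
proof (rule AE_summable_if_nn_integral_suminf_finite)
  \<comment> \<open>Bound each point by the inner radius of its unit shell; the expected bound is finite.\<close>
  define B where "B k = annulus (D + real k) (D + real k + 1)" for k :: nat
  have B: "B k \<in> sets borel \<and> B k \<subseteq> {y. D \<le> cmod y} \<and> bounded (B k)" for k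
    unfolding B_def by (rule annulus_admissible) simp
  have [measurable]: "(\<lambda>\<omega>. of_nat (pp_count Y (B k) \<omega>) :: ennreal) \<in> borel_measurable M" for k
    using B[of k] by (intro count_borel_measurable) auto
  have "AE \<omega> in M. (\<forall>n. D \<le> cmod (Y n \<omega>)) \<and> (\<forall>k. finite {n. Y n \<omega> \<in> B k})"
    using AE_points_in AE_finite_points B by (simp add: AE_all_countable)
  then have "AE \<omega> in M. (\<Sum>n. ennreal (cmod (Y n \<omega>) powr (-\<alpha>)))
      \<le> (\<Sum>k. ennreal ((D + real k) powr (-\<alpha>)) * of_nat (pp_count Y (B k) \<omega>))"
    unfolding pp_count_def B_def
    by eventually_elim (use \<alpha> radius_pos in \<open>auto intro: suminf_powr_le_shell_counts\<close>)
  then have "(\<integral>\<^sup>+\<omega>. (\<Sum>n. ennreal (cmod (Y n \<omega>) powr (-\<alpha>))) \<partial>M)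
      \<le> (\<Sum>k. \<integral>\<^sup>+\<omega>. ennreal ((D + real k) powr (-\<alpha>)) * of_nat (pp_count Y (B k) \<omega>) \<partial>M)"
    by (subst nn_integral_suminf[symmetric]) (auto intro: nn_integral_mono_AE)
  also have "\<dots> = (\<Sum>k. ennreal (\<mu> * pi * ((D + real k) powr (-\<alpha>) * ((D + real k + 1)\<^sup>2 - (D + real k)\<^sup>2))))"
  proof (intro arg_cong[where f=suminf] ext)
    fix k
    have "(\<integral>\<^sup>+\<omega>. ennreal ((D + real k) powr (-\<alpha>)) * of_nat (pp_count Y (B k) \<omega>) \<partial>M)
        = ennreal ((D + real k) powr (-\<alpha>)) * ennreal (\<mu> * measure lborel (B k))"
      using B[of k] by (simp add: nn_integral_cmult nn_integral_count_eq_intensity)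
    also have "measure lborel (B k) = pi * ((D + real k + 1)\<^sup>2 - (D + real k)\<^sup>2)"
      unfolding B_def using radius_pos by (intro measure_annulus) auto
    finally show "(\<integral>\<^sup>+\<omega>. ennreal ((D + real k) powr (-\<alpha>)) * of_nat (pp_count Y (B k) \<omega>) \<partial>M)
        = ennreal (\<mu> * pi * ((D + real k) powr (-\<alpha>) * ((D + real k + 1)\<^sup>2 - (D + real k)\<^sup>2)))"
      by (simp add: ennreal_mult'[symmetric] mult_ac)
  qed
  also have "\<dots> < \<infinity>"
    using summable_shell_weights[OF \<alpha> radius_pos] radius_pos intensity_nonneg
    by (simp add: ennreal_suminf_neq_top less_top summable_mult power_strict_mono)
  finally show "(\<integral>\<^sup>+\<omega>. (\<Sum>n. ennreal (cmod (Y n \<omega>) powr (-\<alpha>))) \<partial>M) \<noteq> \<infinity>"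
    by simp
qed simp_all

definition grid_annulus :: "nat \<Rightarrow> nat \<Rightarrow> complex set" where
  "grid_annulus m j = annulus (grid_point D m j) (grid_point D m (Suc j))"

lemma grid_annulus_iff: "z \<in> grid_annulus m j \<longleftrightarrow> cmod z \<in> grid_cell D m j"
  by (simp add: grid_annulus_def annulus_def grid_cell_def)

lemma grid_annulus_admissible:
  "grid_annulus m j \<in> sets borel \<and> grid_annulus m j \<subseteq> {y. D \<le> cmod y} \<and> bounded (grid_annulus m j)"
  unfolding grid_annulus_def by (rule annulus_admissible) simp

lemma disjoint_family_grid_annulus: "disjoint_family_on (grid_annulus m) {..<m * Suc m}"
  by (auto simp: disjoint_family_on_def grid_annulus_iff grid_cell_iff)

lemma measure_grid_annulus:
  "measure lborel (grid_annulus m j) = pi * ((grid_point D m (Suc j))\<^sup>2 - (grid_point D m j)\<^sup>2)"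
  unfolding grid_annulus_def
proof (rule measure_annulus)
  show "0 \<le> grid_point D m j"
    using radius_pos grid_point_ge[of D m j] by linarith
qed (simp add: grid_point_mono)

lemma grid_annulus_subset_ball:
  assumes "j < m * Suc m"
  shows "grid_annulus m j \<subseteq> ball 0 (D + real m + 1)"
proof
  fix z assume "z \<in> grid_annulus m j"
  then have "cmod z < grid_point D m (Suc j)"
    by (simp add: grid_annulus_iff grid_cell_def)
  also have "\<dots> \<le> D + real m"
    using assms by (intro grid_point_le) simp
  finally show "z \<in> ball 0 (D + real m + 1)"
    by simp
qed

definition locally_finite_config :: "'a \<Rightarrow> bool" where
  "locally_finite_config \<omega> \<longleftrightarrow> (\<forall>n. D \<le> cmod (Y n \<omega>))
     \<and> (\<forall>m::nat. finite {n. Y n \<omega> \<in> ball 0 (D + real m + 1)})"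

lemma AE_locally_finite_config: "AE \<omega> in M. locally_finite_config \<omega>"
proof -
  have "AE \<omega> in M. \<forall>m::nat. finite {n. Y n \<omega> \<in> ball 0 (D + real m + 1)}"
    by (subst AE_all_countable) (intro allI AE_finite_points borel_open open_ball bounded_ball)
  then show ?thesis
    using AE_points_in unfolding locally_finite_config_def by eventually_elim auto
qed

lemma sum_step_approx_points:
  assumes "locally_finite_config \<omega>"
  shows "(\<Sum>n. step_approx \<psi> D m (cmod (Y n \<omega>)))
       = (\<Sum>j<m * Suc m. \<psi> (grid_point D m (Suc j)) * real (pp_count Y (grid_annulus m j) \<omega>))"
proof -
  let ?v = "\<lambda>j. \<psi> (grid_point D m (Suc j))"
  let ?N = "\<lambda>j. {n. Y n \<omega> \<in> grid_annulus m j}"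
  have finite: "finite (?N j)" if "j < m * Suc m" for j
  proof (rule finite_subset)
    show "?N j \<subseteq> {n. Y n \<omega> \<in> ball 0 (D + real m + 1)}"
      using grid_annulus_subset_ball[OF that] by auto
  qed (use assms in \<open>simp add: locally_finite_config_def\<close>)
  have "(\<Sum>n. step_approx \<psi> D m (cmod (Y n \<omega>))) = (\<Sum>n. \<Sum>j<m * Suc m. ?v j * indicator (?N j) n)"
    by (intro arg_cong[where f=suminf] ext) (simp add: step_approx_def indicator_def grid_annulus_iff)
  also have "\<dots> = (\<Sum>j<m * Suc m. \<Sum>n. ?v j * indicator (?N j) n)"
  proof (rule suminf_sum)
    fix j assume "j \<in> {..<m * Suc m}"
    then show "summable (\<lambda>n. ?v j * indicator (?N j) n)"
      using finite by (intro summable_finite[of "?N j"]) auto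
  qed
  also have "\<dots> = (\<Sum>j<m * Suc m. ?v j * real (card (?N j)))"
  proof (rule sum.cong[OF refl])
    fix j assume "j \<in> {..<m * Suc m}"
    then have "(\<Sum>n. ?v j * indicator (?N j) n) = (\<Sum>n\<in>?N j. ?v j * indicator (?N j) n)"
      using finite by (intro suminf_finite) auto
    then show "(\<Sum>n. ?v j * indicator (?N j) n) = ?v j * real (card (?N j))"
      by simp
  qed
  finally show ?thesis
    by (simp add: pp_count_def)
qed

lemma integral_exp_sum_step_approx:
  assumes nonneg: "\<And>t. D \<le> t \<Longrightarrow> 0 \<le> \<psi> t"
  shows "(\<integral>\<omega>. exp (- (\<Sum>n. step_approx \<psi> D m (cmod (Y n \<omega>)))) \<partial>M)
       = exp (- (2 * pi * \<mu> * (LBINT t:{D..}. (1 - exp (- step_approx \<psi> D m t)) * t)))"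
proof -
  let ?v = "\<lambda>j. \<psi> (grid_point D m (Suc j))"
  have [measurable]: "(\<lambda>\<omega>. real (pp_count Y (grid_annulus m j) \<omega>)) \<in> borel_measurable M" for j
    using grid_annulus_admissible by (intro count_borel_measurable) auto
  have "(\<integral>\<omega>. exp (- (\<Sum>n. step_approx \<psi> D m (cmod (Y n \<omega>)))) \<partial>M)
      = (\<integral>\<omega>. exp (- (\<Sum>j<m * Suc m. ?v j * real (pp_count Y (grid_annulus m j) \<omega>))) \<partial>M)"
    using AE_locally_finite_config
    by (intro integral_cong_AE) (auto elim!: eventually_mono simp: sum_step_approx_points)
  also have "\<dots> = exp (- (\<Sum>j<m * Suc m. \<mu> * measure lborel (grid_annulus m j) * (1 - exp (- ?v j))))"
    using grid_annulus_admissible disjoint_family_grid_annulus nonneg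
    by (intro integral_exp_sum_counts) auto
  also have "(\<Sum>j<m * Suc m. \<mu> * measure lborel (grid_annulus m j) * (1 - exp (- ?v j)))
      = 2 * pi * \<mu> * (\<Sum>j<m * Suc m. (1 - exp (- ?v j)) * ((grid_point D m (Suc j))\<^sup>2 - (grid_point D m j)\<^sup>2) / 2)"
    unfolding sum_distrib_left by (intro sum.cong refl) (simp add: measure_grid_annulus field_simps)
  finally show ?thesis
    by (simp add: integral_step_approx)
qed

lemma integral_exp_sum_step_approx_tendsto:
  fixes \<alpha> K :: real
  assumes \<alpha>: "2 < \<alpha>" and [measurable]: "\<psi> \<in> borel_measurable borel"
    and nonneg: "\<And>t. D \<le> t \<Longrightarrow> 0 \<le> \<psi> t"
    and antimono: "\<And>s t. D \<le> s \<Longrightarrow> s \<le> t \<Longrightarrow> \<psi> t \<le> \<psi> s"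
    and cont: "continuous_on {D..} \<psi>"
    and bound: "\<And>t. D \<le> t \<Longrightarrow> \<psi> t \<le> K * t powr (-\<alpha>)"
  shows "(\<lambda>m. \<integral>\<omega>. exp (- (\<Sum>n. step_approx \<psi> D m (cmod (Y n \<omega>)))) \<partial>M)
           \<longlonglongrightarrow> (\<integral>\<omega>. exp (- (\<Sum>n. \<psi> (cmod (Y n \<omega>)))) \<partial>M)"
proof (rule integral_dominated_convergence[where w="\<lambda>_. 1"])
  have "AE \<omega> in M. (\<forall>n. D \<le> cmod (Y n \<omega>)) \<and> summable (\<lambda>n. \<psi> (cmod (Y n \<omega>)))"
    using AE_points_in AE_summable_powr[OF \<alpha>]
  proof eventually_elim
    case (elim \<omega>)
    then have "summable (\<lambda>n. K * cmod (Y n \<omega>) powr (-\<alpha>))"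
      by (intro summable_mult) simp
    then have "summable (\<lambda>n. \<psi> (cmod (Y n \<omega>)))"
    proof (rule summable_comparison_test[rotated], intro exI allI impI)
      fix n :: nat
      have "D \<le> cmod (Y n \<omega>)"
        using elim by simp
      then show "norm (\<psi> (cmod (Y n \<omega>))) \<le> K * cmod (Y n \<omega>) powr (-\<alpha>)"
        using nonneg bound by simp
    qed
    with elim show ?case by simp
  qed
  then show "AE \<omega> in M. (\<lambda>m. exp (- (\<Sum>n. step_approx \<psi> D m (cmod (Y n \<omega>)))))
      \<longlonglongrightarrow> exp (- (\<Sum>n. \<psi> (cmod (Y n \<omega>))))"
  proof eventually_elim
    case (elim \<omega>)
    then have "(\<lambda>m. \<Sum>n. step_approx \<psi> D m (cmod (Y n \<omega>))) \<longlonglongrightarrow> (\<Sum>n. \<psi> (cmod (Y n \<omega>)))"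
      by (intro suminf_step_approx_tendsto[OF _ _ nonneg antimono cont]) auto
    then show ?case
      by (intro tendsto_exp tendsto_minus)
  qed
  fix m
  show "AE \<omega> in M. norm (exp (- (\<Sum>n. step_approx \<psi> D m (cmod (Y n \<omega>))))) \<le> 1"
    using AE_locally_finite_config
  proof eventually_elim
    case (elim \<omega>)
    have "0 \<le> (\<Sum>n. step_approx \<psi> D m (cmod (Y n \<omega>)))"
      using nonneg by (simp add: sum_step_approx_points[OF elim] sum_nonneg)
    then show ?case by simp
  qed
qed simp_all

lemma laplace_functional:
  fixes \<alpha> K :: real
  assumes \<alpha>: "2 < \<alpha>" and \<psi>_measurable: "\<psi> \<in> borel_measurable borel"
    and nonneg: "\<And>t. D \<le> t \<Longrightarrow> 0 \<le> \<psi> t"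
    and antimono: "\<And>s t. D \<le> s \<Longrightarrow> s \<le> t \<Longrightarrow> \<psi> t \<le> \<psi> s"
    and cont: "continuous_on {D..} \<psi>"
    and bound: "\<And>t. D \<le> t \<Longrightarrow> \<psi> t \<le> K * t powr (-\<alpha>)"
  shows "(\<integral>\<omega>. exp (- (\<Sum>n. \<psi> (cmod (Y n \<omega>)))) \<partial>M)
       = exp (- (2 * pi * \<mu> * (LBINT t:{D..}. (1 - exp (- \<psi> t)) * t)))"
proof (rule LIMSEQ_unique)
  note \<psi> = \<psi>_measurable nonneg antimono cont bound
  show "(\<lambda>m. exp (- (2 * pi * \<mu> * (LBINT t:{D..}. (1 - exp (- step_approx \<psi> D m t)) * t))))
      \<longlonglongrightarrow> exp (- (2 * pi * \<mu> * (LBINT t:{D..}. (1 - exp (- \<psi> t)) * t)))"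
    by (intro tendsto_exp tendsto_minus tendsto_mult_left integral_step_approx_tendsto[OF radius_pos \<alpha> \<psi>])
  show "(\<lambda>m. exp (- (2 * pi * \<mu> * (LBINT t:{D..}. (1 - exp (- step_approx \<psi> D m t)) * t))))
      \<longlonglongrightarrow> (\<integral>\<omega>. exp (- (\<Sum>n. \<psi> (cmod (Y n \<omega>)))) \<partial>M)"
    using integral_exp_sum_step_approx_tendsto[OF \<alpha> \<psi>] by (simp add: integral_exp_sum_step_approx[OF nonneg])
qed

end

section \<open>Rayleigh fading\<close>

text \<open>Fading gains are indexed by (None, \<beta>) for the typical device and by (Some n, \<beta>) for
  the n-th interferer, in symbol group \<beta>.\<close>

definition fading_threshold :: "real \<Rightarrow> (nat \<Rightarrow> real) \<Rightarrow> real \<Rightarrow> nat \<Rightarrow> (nat option \<times> nat \<Rightarrow> real) \<Rightarrow> real" where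
  "fading_threshold c a s \<beta> g = c * (\<Sum>n. g (Some n, \<beta>) * a n) + s"

lemma fading_threshold_measurable:
  "range (\<lambda>n. (Some n, \<beta>)) \<subseteq> I \<Longrightarrow> fading_threshold c a s \<beta> \<in> PiM I (\<lambda>_. borel) \<rightarrow>\<^sub>M borel"
  unfolding fading_threshold_def
  by (intro borel_measurable_add borel_measurable_const borel_measurable_times borel_measurable_suminf
      measurable_component_singleton) auto

definition sinr_coverage ::
  "real \<Rightarrow> real \<Rightarrow> real \<Rightarrow> real \<Rightarrow> nat \<Rightarrow> real \<Rightarrow> (nat \<Rightarrow> complex) \<Rightarrow> (nat option \<times> nat \<Rightarrow> real) \<Rightarrow> bool"
where
  "sinr_coverage P \<alpha> \<sigma>2 \<gamma> l r y g \<longleftrightarrow> (\<forall>\<beta>\<in>{1..l}.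
     \<gamma> \<le> P * g (None, \<beta>) * r powr (-\<alpha>) / ((\<Sum>n. P * g (Some n, \<beta>) * cmod (y n) powr (-\<alpha>)) + \<sigma>2))"

lemma sinr_coverage_measurable_pair [measurable]:
  "(\<lambda>(y, g). of_bool (sinr_coverage P \<alpha> \<sigma>2 \<gamma> l r y g) :: real)
     \<in> borel_measurable (PiM UNIV (\<lambda>_. borel) \<Otimes>\<^sub>M PiM UNIV (\<lambda>_. borel))"
  unfolding sinr_coverage_def case_prod_beta by measurable

lemma sinr_coverage_measurable_triple [measurable]:
  "(\<lambda>(r, y, g). of_bool (sinr_coverage P \<alpha> \<sigma>2 \<gamma> l r y g) :: real)
     \<in> borel_measurable (borel \<Otimes>\<^sub>M (PiM UNIV (\<lambda>_. borel) \<Otimes>\<^sub>M PiM UNIV (\<lambda>_. borel)))"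
  unfolding sinr_coverage_def case_prod_beta by measurable

lemma sinr_ge_iff:
  fixes P r d \<gamma> g \<alpha> :: real
  assumes P: "0 < P" and r: "0 < r" and d: "0 < d"
  shows "\<gamma> \<le> P * g * r powr (-\<alpha>) / d \<longleftrightarrow> \<gamma> * r powr \<alpha> * d / P \<le> g"
proof -
  have "P * g * r powr (-\<alpha>) / d = P * g / (r powr \<alpha> * d)"
    using r by (simp add: powr_minus divide_inverse)
  then show ?thesis
    using P r d by (simp add: pos_le_divide_eq pos_divide_le_eq mult_ac)
qed

lemma sinr_coverage_iff_threshold:
  fixes g :: "nat option \<times> nat \<Rightarrow> real" and y :: "nat \<Rightarrow> complex"
  assumes P: "0 < P" and \<sigma>2: "0 \<le> \<sigma>2" and r: "0 < r"
    and y: "\<And>n. 0 < cmod (y n)" and g: "\<And>n \<beta>. 0 < g (Some n, \<beta>)"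
    and summable: "\<And>\<beta>. summable (\<lambda>n. g (Some n, \<beta>) * cmod (y n) powr (-\<alpha>))"
  shows "sinr_coverage P \<alpha> \<sigma>2 \<gamma> l r y g \<longleftrightarrow> (\<forall>\<beta>\<in>{1..l}.
           fading_threshold (\<gamma> * r powr \<alpha>) (\<lambda>n. cmod (y n) powr (-\<alpha>)) (\<gamma> * r powr \<alpha> * \<sigma>2 / P) \<beta> g
             \<le> g (None, \<beta>))"
proof -
  have "\<gamma> \<le> P * g (None, \<beta>) * r powr (-\<alpha>) / ((\<Sum>n. P * g (Some n, \<beta>) * cmod (y n) powr (-\<alpha>)) + \<sigma>2)
      \<longleftrightarrow> fading_threshold (\<gamma> * r powr \<alpha>) (\<lambda>n. cmod (y n) powr (-\<alpha>)) (\<gamma> * r powr \<alpha> * \<sigma>2 / P) \<beta> g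
            \<le> g (None, \<beta>)" for \<beta>
  proof -
    define T where "T = (\<Sum>n. g (Some n, \<beta>) * cmod (y n) powr (-\<alpha>))"
    have "0 < T"
      unfolding T_def using summable y g by (intro suminf_pos) auto
    then have d: "0 < P * T + \<sigma>2"
      using P \<sigma>2 by (simp add: add_pos_nonneg)
    have "(\<Sum>n. P * g (Some n, \<beta>) * cmod (y n) powr (-\<alpha>)) = P * T"
      unfolding T_def using suminf_mult[OF summable, of P] by (simp add: mult.assoc)
    then have "\<gamma> \<le> P * g (None, \<beta>) * r powr (-\<alpha>) / ((\<Sum>n. P * g (Some n, \<beta>) * cmod (y n) powr (-\<alpha>)) + \<sigma>2)
        \<longleftrightarrow> \<gamma> * r powr \<alpha> * (P * T + \<sigma>2) / P \<le> g (None, \<beta>)"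
      using sinr_ge_iff[OF P r d] by simp
    also have "\<gamma> * r powr \<alpha> * (P * T + \<sigma>2) / P
        = fading_threshold (\<gamma> * r powr \<alpha>) (\<lambda>n. cmod (y n) powr (-\<alpha>)) (\<gamma> * r powr \<alpha> * \<sigma>2 / P) \<beta> g"
      using P by (simp add: fading_threshold_def T_def field_simps)
    finally show ?thesis .
  qed
  then show ?thesis
    by (simp add: sinr_coverage_def)
qed

locale rayleigh_fading = prob_space M for M :: "'a measure" +
  fixes h :: "nat option \<Rightarrow> nat \<Rightarrow> 'a \<Rightarrow> real"
  assumes fading_exponential: "\<And>k \<beta>. distributed M lborel (h k \<beta>) (exponential_density 1)"
    and fading_indep: "indep_vars (\<lambda>_. borel) (\<lambda>(k, \<beta>). h k \<beta>) UNIV"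
begin

lemma fading_measurable [measurable]: "h k \<beta> \<in> borel_measurable M"
  using distributed_measurable[OF fading_exponential[of k \<beta>]] by (simp add: measurable_lborel2)

lemma fading_measurable_PiM [measurable]: "(\<lambda>\<omega> (k, \<beta>). h k \<beta> \<omega>) \<in> M \<rightarrow>\<^sub>M PiM UNIV (\<lambda>_. borel)"
  by (rule measurable_PiM_single'[where f="\<lambda>i \<omega>. case_prod (\<lambda>k \<beta>. h k \<beta> \<omega>) i"])
     (auto split: prod.split)

lemma AE_fading_pos: "AE \<omega> in M. \<forall>k \<beta>. 0 < h k \<beta> \<omega>"
  using exponential_distributed_AE_pos[OF fading_exponential] by (simp add: AE_all_countable)

lemma indep_vars_fading_blocks:
  fixes G :: "'b \<Rightarrow> (nat option \<times> nat \<Rightarrow> real) \<Rightarrow> real"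
  assumes "\<And>b. b \<in> L \<Longrightarrow> G b \<in> PiM (I b) (\<lambda>_. borel) \<rightarrow>\<^sub>M borel" and "disjoint_family_on I L"
  shows "indep_vars (\<lambda>_. borel) (\<lambda>b \<omega>. G b (restrict (\<lambda>i. case_prod h i \<omega>) (I b))) L"
proof -
  have "indep_vars (\<lambda>b. PiM (I b) (\<lambda>_. borel)) (\<lambda>b \<omega>. restrict (\<lambda>i. case_prod h i \<omega>) (I b)) L"
    using indep_vars_restrict[OF fading_indep _ assms(2)] by simp
  from indep_vars_compose2[OF this assms(1)] show ?thesis
    by simp
qed

lemma integral_exp_partial_interference:
  assumes a: "\<And>n. 0 \<le> a n" and c: "0 \<le> c"
  shows "(\<integral>\<omega>. exp (- (c * (\<Sum>n<N. h (Some n) \<beta> \<omega> * a n))) \<partial>M) = (\<Prod>n<N. 1 / (1 + c * a n))"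
proof -
  have "(\<lambda>x. exp (- (c * a n * x (Some n, \<beta>)))) \<in> PiM {(Some n, \<beta>)} (\<lambda>_. borel) \<rightarrow>\<^sub>M borel" for n
    by measurable
  then have "indep_vars (\<lambda>_. borel)
      (\<lambda>n \<omega>. exp (- (c * a n * restrict (\<lambda>i. case_prod h i \<omega>) {(Some n, \<beta>)} (Some n, \<beta>)))) UNIV"
    by (intro indep_vars_fading_blocks[where G="\<lambda>n x. exp (- (c * a n * x (Some n, \<beta>)))"])
       (auto simp: disjoint_family_on_def)
  then have "indep_vars (\<lambda>_. borel) (\<lambda>n \<omega>. exp (- (c * a n * h (Some n) \<beta> \<omega>))) UNIV"
    by simp
  then have indep: "indep_vars (\<lambda>_. borel) (\<lambda>n \<omega>. exp (- (c * a n * h (Some n) \<beta> \<omega>))) {..<N}"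
    by (rule indep_vars_subset) simp
  have "AE \<omega> in M. norm (exp (- (c * a n * h (Some n) \<beta> \<omega>))) \<le> 1" for n
    using AE_fading_pos by eventually_elim (use a c in \<open>simp add: less_imp_le\<close>)
  then have "(\<integral>\<omega>. (\<Prod>n<N. exp (- (c * a n * h (Some n) \<beta> \<omega>))) \<partial>M)
      = (\<Prod>n<N. \<integral>\<omega>. exp (- (c * a n * h (Some n) \<beta> \<omega>)) \<partial>M)"
    by (intro indep_vars_lebesgue_integral[OF _ indep] integrable_const_bound[where B=1]) auto
  also have "\<dots> = (\<Prod>n<N. 1 / (1 + c * a n))"
    using exponential_distributed_laplace[OF fading_exponential] a c by simp
  finally show ?thesis
    by (simp add: exp_sum[symmetric] sum_negf sum_distrib_left mult_ac)
qed

lemma AE_summable_interference: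
  assumes a: "\<And>n. 0 \<le> a n" and "summable a"
  shows "AE \<omega> in M. summable (\<lambda>n. h (Some n) \<beta> \<omega> * a n)"
proof (rule AE_summable_if_nn_integral_suminf_finite)
  show "AE \<omega> in M. \<forall>n. 0 \<le> h (Some n) \<beta> \<omega> * a n"
    using AE_fading_pos by eventually_elim (use a in \<open>simp add: less_imp_le\<close>)
  have "(\<integral>\<^sup>+\<omega>. (\<Sum>n. ennreal (h (Some n) \<beta> \<omega> * a n)) \<partial>M) = (\<Sum>n. (\<integral>\<^sup>+\<omega>. ennreal (h (Some n) \<beta> \<omega>) \<partial>M) * ennreal (a n))"
    using a by (simp add: nn_integral_suminf ennreal_mult'' nn_integral_multc)
  also have "\<dots> = (\<Sum>n. ennreal (a n))"
    using exponential_distributed_nn_integral[OF fading_exponential] by simp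
  finally show "(\<integral>\<^sup>+\<omega>. (\<Sum>n. ennreal (h (Some n) \<beta> \<omega> * a n)) \<partial>M) \<noteq> \<infinity>"
    using ennreal_suminf_neq_top[OF assms(2) a] by simp
qed simp

lemma integral_exp_interference:
  assumes a: "\<And>n. 0 \<le> a n" and summable: "summable a" and c: "0 \<le> c"
  shows "(\<integral>\<omega>. exp (- (c * (\<Sum>n. h (Some n) \<beta> \<omega> * a n))) \<partial>M) = exp (- (\<Sum>n. ln (1 + c * a n)))"
proof (rule LIMSEQ_unique)
  have "summable (\<lambda>n. ln (1 + c * a n))"
    using a c ln_add_one_self_le_self
    by (intro summable_comparison_test[OF _ summable_mult[OF summable, of c]]) auto
  then show "(\<lambda>N. exp (- (\<Sum>n<N. ln (1 + c * a n)))) \<longlonglongrightarrow> exp (- (\<Sum>n. ln (1 + c * a n)))"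
    by (intro tendsto_exp tendsto_minus summable_LIMSEQ)
  have "(\<lambda>N. \<integral>\<omega>. exp (- (c * (\<Sum>n<N. h (Some n) \<beta> \<omega> * a n))) \<partial>M)
      \<longlonglongrightarrow> (\<integral>\<omega>. exp (- (c * (\<Sum>n. h (Some n) \<beta> \<omega> * a n))) \<partial>M)"
  proof (rule integral_dominated_convergence[where w="\<lambda>_. 1"])
    show "AE \<omega> in M. (\<lambda>N. exp (- (c * (\<Sum>n<N. h (Some n) \<beta> \<omega> * a n))))
        \<longlonglongrightarrow> exp (- (c * (\<Sum>n. h (Some n) \<beta> \<omega> * a n)))"
      using AE_summable_interference[OF a summable]
      by eventually_elim (intro tendsto_exp tendsto_minus tendsto_mult_left summable_LIMSEQ)
    show "AE \<omega> in M. norm (exp (- (c * (\<Sum>n<N. h (Some n) \<beta> \<omega> * a n)))) \<le> 1" for N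
      using AE_fading_pos
      by eventually_elim (use a c in \<open>simp add: less_imp_le sum_nonneg\<close>)
  qed simp_all
  moreover have "(\<integral>\<omega>. exp (- (c * (\<Sum>n<N. h (Some n) \<beta> \<omega> * a n))) \<partial>M) = exp (- (\<Sum>n<N. ln (1 + c * a n)))" for N
  proof -
    have "(\<integral>\<omega>. exp (- (c * (\<Sum>n<N. h (Some n) \<beta> \<omega> * a n))) \<partial>M) = (\<Prod>n<N. 1 / (1 + c * a n))"
      by (rule integral_exp_partial_interference[OF a c])
    also have "\<dots> = (\<Prod>n<N. exp (- ln (1 + c * a n)))"
      using a c by (intro prod.cong refl) (simp add: exp_minus inverse_eq_divide add_pos_nonneg)
    finally show ?thesis
      by (simp add: exp_sum[symmetric] sum_negf)
  qed
  ultimately show "(\<lambda>N. exp (- (\<Sum>n<N. ln (1 + c * a n)))) \<longlonglongrightarrow> (\<integral>\<omega>. exp (- (c * (\<Sum>n. h (Some n) \<beta> \<omega> * a n))) \<partial>M)"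
    by simp
qed

lemma fading_threshold_random_variable [measurable]:
  "(\<lambda>\<omega>. fading_threshold c a s \<beta> (\<lambda>(k, \<beta>). h k \<beta> \<omega>)) \<in> borel_measurable M"
  unfolding fading_threshold_def prod.case by measurable

lemma indep_var_threshold_fading:
  "indep_var borel (\<lambda>\<omega>. fading_threshold c a s \<beta> (\<lambda>(k, \<beta>). h k \<beta> \<omega>)) borel (h None \<beta>)"
proof -
  let ?I = "case_bool (range (\<lambda>n. (Some n, \<beta>))) {(None, \<beta>)}"
  let ?G = "case_bool (fading_threshold c a s \<beta>) (\<lambda>x. x (None, \<beta>))"
  have blocks: "indep_vars (\<lambda>_. borel) (\<lambda>b \<omega>. ?G b (restrict (\<lambda>i. case_prod h i \<omega>) (?I b))) UNIV"
  proof (rule indep_vars_fading_blocks)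
    fix b :: bool
    show "?G b \<in> PiM (?I b) (\<lambda>_. borel) \<rightarrow>\<^sub>M borel"
      by (cases b) (auto intro!: fading_threshold_measurable measurable_component_singleton)
  qed (auto simp: disjoint_family_on_def split: bool.split)
  have "indep_vars (case_bool borel borel)
      (case_bool (\<lambda>\<omega>. fading_threshold c a s \<beta> (\<lambda>(k, \<beta>). h k \<beta> \<omega>)) (h None \<beta>)) UNIV"
  proof (rule indep_vars_cong[THEN iffD1, OF refl _ _ blocks])
    fix b :: bool
    show "(\<lambda>\<omega>. ?G b (restrict (\<lambda>i. case_prod h i \<omega>) (?I b)))
        = case_bool (\<lambda>\<omega>. fading_threshold c a s \<beta> (\<lambda>(k, \<beta>). h k \<beta> \<omega>)) (h None \<beta>) b"
      by (cases b) (auto simp: fading_threshold_def)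
    show "(borel :: real measure) = case_bool borel borel b"
      by (cases b) auto
  qed
  then show ?thesis
    by (simp add: indep_var_def)
qed

lemma prob_fading_ge_threshold:
  assumes a: "\<And>n. 0 \<le> a n" and summable: "summable a" and c: "0 \<le> c" and s: "0 \<le> s"
  shows "\<P>(\<omega> in M. fading_threshold c a s \<beta> (\<lambda>(k, \<beta>). h k \<beta> \<omega>) \<le> h None \<beta> \<omega>)
       = exp (- s) * exp (- (\<Sum>n. ln (1 + c * a n)))"
proof -
  have "AE \<omega> in M. 0 \<le> fading_threshold c a s \<beta> (\<lambda>(k, \<beta>). h k \<beta> \<omega>)"
    using AE_summable_interference[OF a summable, of \<beta>] AE_fading_pos
  proof eventually_elim
    case (elim \<omega>)
    have "0 \<le> (\<Sum>n. h (Some n) \<beta> \<omega> * a n)"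
      using elim a by (intro suminf_nonneg) (auto simp: less_imp_le)
    then show ?case
      using c s by (simp add: fading_threshold_def)
  qed
  then have "\<P>(\<omega> in M. fading_threshold c a s \<beta> (\<lambda>(k, \<beta>). h k \<beta> \<omega>) \<le> h None \<beta> \<omega>)
      = expectation (\<lambda>\<omega>. exp (- s) * exp (- (c * (\<Sum>n. h (Some n) \<beta> \<omega> * a n))))"
    using prob_le_exponential_indep[OF indep_var_threshold_fading fading_exponential]
    by (simp add: fading_threshold_def mult_exp_exp algebra_simps)
  then show ?thesis
    by (simp add: integral_exp_interference[OF a summable c])
qed

lemma prob_fading_ge_threshold_all:
  assumes a: "\<And>n. 0 \<le> a n" and summable: "summable a" and c: "0 \<le> c" and s: "0 \<le> s"
  shows "\<P>(\<omega> in M. \<forall>\<beta>\<in>{1..l}. fading_threshold c a s \<beta> (\<lambda>(k, \<beta>). h k \<beta> \<omega>) \<le> h None \<beta> \<omega>)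
       = (exp (- s) * exp (- (\<Sum>n. ln (1 + c * a n)))) ^ l"
proof -
  let ?E = "\<lambda>\<beta> \<omega>. fading_threshold c a s \<beta> (\<lambda>(k, \<beta>). h k \<beta> \<omega>) \<le> h None \<beta> \<omega>"
  let ?G = "\<lambda>\<beta> x. of_bool (fading_threshold c a s \<beta> x \<le> x (None, \<beta>)) :: real"
  \<comment> \<open>distinct symbol groups use disjoint sets of fading gains\<close>
  have blocks: "indep_vars (\<lambda>_. borel) (\<lambda>\<beta> \<omega>. ?G \<beta> (restrict (\<lambda>i. case_prod h i \<omega>) (UNIV \<times> {\<beta>}))) {1..l}"
  proof (rule indep_vars_fading_blocks)
    fix \<beta> :: nat
    have "fading_threshold c a s \<beta> \<in> PiM (UNIV \<times> {\<beta>}) (\<lambda>_. borel) \<rightarrow>\<^sub>M borel"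
      by (rule fading_threshold_measurable) auto
    moreover have "(\<lambda>x. x (None, \<beta>)) \<in> PiM (UNIV \<times> {\<beta>}) (\<lambda>_. borel) \<rightarrow>\<^sub>M (borel :: real measure)"
      by (rule measurable_component_singleton) simp
    ultimately have "Measurable.pred (PiM (UNIV \<times> {\<beta>}) (\<lambda>_. borel)) (\<lambda>x. fading_threshold c a s \<beta> x \<le> x (None, \<beta>))"
      unfolding pred_def by (rule borel_measurable_le)
    from measurable_compose[OF this measurable_of_bool]
    show "?G \<beta> \<in> PiM (UNIV \<times> {\<beta>}) (\<lambda>_. borel) \<rightarrow>\<^sub>M borel"
      by (simp add: comp_def)
  qed (auto simp: disjoint_family_on_def)
  have indep: "indep_vars (\<lambda>_. borel) (\<lambda>\<beta> \<omega>. of_bool (?E \<beta> \<omega>) :: real) {1..l}"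
    by (rule indep_vars_cong[THEN iffD1, OF refl _ refl blocks]) (auto simp: fading_threshold_def)
  have "\<P>(\<omega> in M. \<forall>\<beta>\<in>{1..l}. ?E \<beta> \<omega>) = (\<integral>\<omega>. (\<Prod>\<beta>\<in>{1..l}. of_bool (?E \<beta> \<omega>)) \<partial>M)"
    by (simp add: integral_of_bool_eq_measure prod_of_bool)
  also have "\<dots> = (\<Prod>\<beta>\<in>{1..l}. \<integral>\<omega>. of_bool (?E \<beta> \<omega>) \<partial>M)"
    by (intro indep_vars_lebesgue_integral[OF _ indep] integrable_const_bound[where B=1]) auto
  also have "\<dots> = (exp (- s) * exp (- (\<Sum>n. ln (1 + c * a n)))) ^ l"
    by (simp add: integral_of_bool_eq_measure prob_fading_ge_threshold[OF a summable c s])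
  finally show ?thesis .
qed

lemma sinr_coverage_measurable [measurable]:
  "Measurable.pred M (\<lambda>\<omega>. sinr_coverage P \<alpha> \<sigma>2 \<gamma> l r y (\<lambda>(k, \<beta>). h k \<beta> \<omega>))"
  unfolding sinr_coverage_def prod.case by measurable

lemma prob_sinr_coverage_given_points:
  fixes y :: "nat \<Rightarrow> complex"
  assumes P: "0 < P" and \<sigma>2: "0 \<le> \<sigma>2" and \<gamma>: "0 \<le> \<gamma>" and r: "0 < r"
    and y: "\<And>n. 0 < cmod (y n)" and summable: "summable (\<lambda>n. cmod (y n) powr (-\<alpha>))"
  shows "(\<integral>\<omega>. of_bool (sinr_coverage P \<alpha> \<sigma>2 \<gamma> l r y (\<lambda>(k, \<beta>). h k \<beta> \<omega>)) \<partial>M)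
       = exp (- (real l * \<gamma> * \<sigma>2 * r powr \<alpha> / P))
         * exp (- (\<Sum>n. real l * ln (1 + \<gamma> * r powr \<alpha> * cmod (y n) powr (-\<alpha>))))"
proof -
  define c where "c = \<gamma> * r powr \<alpha>"
  define a where "a n = cmod (y n) powr (-\<alpha>)" for n
  have a: "0 \<le> a n" for n
    by (simp add: a_def)
  have summable_a: "summable a"
    using summable by (simp add: a_def[abs_def])
  have c: "0 \<le> c"
    using \<gamma> by (simp add: c_def)
  have "AE \<omega> in M. \<forall>\<beta>. summable (\<lambda>n. h (Some n) \<beta> \<omega> * a n)"
    using AE_summable_interference[OF a summable_a] by (simp add: AE_all_countable)
  then have "AE \<omega> in M. sinr_coverage P \<alpha> \<sigma>2 \<gamma> l r y (\<lambda>(k, \<beta>). h k \<beta> \<omega>)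
      \<longleftrightarrow> (\<forall>\<beta>\<in>{1..l}. fading_threshold c a (c * \<sigma>2 / P) \<beta> (\<lambda>(k, \<beta>). h k \<beta> \<omega>) \<le> h None \<beta> \<omega>)"
    using AE_fading_pos
  proof eventually_elim
    case (elim \<omega>)
    then show ?case
      using sinr_coverage_iff_threshold[OF P \<sigma>2 r y, where g="\<lambda>(k, \<beta>). h k \<beta> \<omega>" and \<alpha>=\<alpha> and \<gamma>=\<gamma> and l=l]
      by (simp add: c_def a_def[abs_def])
  qed
  then have "(\<integral>\<omega>. of_bool (sinr_coverage P \<alpha> \<sigma>2 \<gamma> l r y (\<lambda>(k, \<beta>). h k \<beta> \<omega>)) \<partial>M)
      = \<P>(\<omega> in M. \<forall>\<beta>\<in>{1..l}. fading_threshold c a (c * \<sigma>2 / P) \<beta> (\<lambda>(k, \<beta>). h k \<beta> \<omega>) \<le> h None \<beta> \<omega>)"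
    by (subst integral_of_bool_eq_measure[symmetric], intro integral_cong_AE) (auto elim!: eventually_mono)
  also have "\<dots> = (exp (- (c * \<sigma>2 / P)) * exp (- (\<Sum>n. ln (1 + c * a n)))) ^ l"
    using P \<sigma>2 c by (intro prob_fading_ge_threshold_all a summable_a) simp_all
  also have "\<dots> = exp (- (real l * (c * \<sigma>2 / P))) * exp (- (real l * (\<Sum>n. ln (1 + c * a n))))"
    by (simp add: power_mult_distrib exp_of_nat_mult[symmetric])
  also have "real l * (\<Sum>n. ln (1 + c * a n)) = (\<Sum>n. real l * ln (1 + c * a n))"
    using a c ln_add_one_self_le_self
    by (intro suminf_mult[symmetric] summable_comparison_test[OF _ summable_mult[OF summable_a, of c]]) auto
  finally show ?thesis
    by (simp add: c_def a_def mult_ac)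
qed

end

section \<open>Coverage probability\<close>

lemma
  fixes c \<alpha> D :: real
  assumes c: "0 \<le> c" and \<alpha>: "0 < \<alpha>" and D: "0 < D"
  shows interference_exponent_nonneg: "D \<le> t \<Longrightarrow> 0 \<le> real l * ln (1 + c * t powr (-\<alpha>))"
    and interference_exponent_le: "D \<le> t \<Longrightarrow> real l * ln (1 + c * t powr (-\<alpha>)) \<le> real l * c * t powr (-\<alpha>)"
    and interference_exponent_antimono: "D \<le> s \<Longrightarrow> s \<le> t
      \<Longrightarrow> real l * ln (1 + c * t powr (-\<alpha>)) \<le> real l * ln (1 + c * s powr (-\<alpha>))"
    and interference_exponent_continuous: "continuous_on {D..} (\<lambda>t. real l * ln (1 + c * t powr (-\<alpha>)))"
    and exp_interference_exponent: "exp (- (real l * ln (1 + c * t powr (-\<alpha>)))) = (1 / (1 + c * t powr (-\<alpha>))) ^ l"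
proof -
  have pos: "0 < 1 + c * t powr (-\<alpha>)" for t
    using c by (simp add: add_pos_nonneg)
  show "D \<le> t \<Longrightarrow> 0 \<le> real l * ln (1 + c * t powr (-\<alpha>))"
    using c by simp
  show "D \<le> t \<Longrightarrow> real l * ln (1 + c * t powr (-\<alpha>)) \<le> real l * c * t powr (-\<alpha>)"
    using ln_add_one_self_le_self[of "c * t powr (-\<alpha>)"] c by (simp add: mult_left_mono mult.assoc)
  show "real l * ln (1 + c * t powr (-\<alpha>)) \<le> real l * ln (1 + c * s powr (-\<alpha>))" if "D \<le> s" "s \<le> t"
    using that D \<alpha> c pos by (auto intro!: mult_left_mono powr_mono2' simp: ln_le_cancel_iff)
  have "1 + c * t powr (-\<alpha>) \<noteq> 0" for t
    using pos[of t] by simp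
  then show "continuous_on {D..} (\<lambda>t. real l * ln (1 + c * t powr (-\<alpha>)))"
    using D by (intro continuous_intros) auto
  show "exp (- (real l * ln (1 + c * t powr (-\<alpha>)))) = (1 / (1 + c * t powr (-\<alpha>))) ^ l"
    using pos[of t] by (simp add: exp_minus exp_of_nat_mult power_one_over inverse_eq_divide)
qed

locale uplink_model = exterior_poisson_point_process M \<mu> D Y + rayleigh_fading M h
  for M :: "'a measure" and \<mu> D :: real and Y :: "nat \<Rightarrow> 'a \<Rightarrow> complex"
    and h :: "nat option \<Rightarrow> nat \<Rightarrow> 'a \<Rightarrow> real" +
  assumes indep_points_fading:
    "indep_set (sets (vimage_algebra (space M) (\<lambda>\<omega> n. Y n \<omega>) (PiM UNIV (\<lambda>_. borel))))
       (sets (vimage_algebra (space M) (\<lambda>\<omega> (k, \<beta>). h k \<beta> \<omega>) (PiM UNIV (\<lambda>_. borel))))"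
begin

lemma AE_coverage_prob_given_points:
  assumes \<alpha>: "2 < \<alpha>" and P: "0 < P" and \<sigma>2: "0 \<le> \<sigma>2" and \<gamma>: "0 \<le> \<gamma>" and r: "0 < r"
  shows "AE \<omega> in M. (\<integral>\<omega>'. of_bool (sinr_coverage P \<alpha> \<sigma>2 \<gamma> l r (\<lambda>n. Y n \<omega>) (\<lambda>(k, \<beta>). h k \<beta> \<omega>')) \<partial>M)
      = exp (- (real l * \<gamma> * \<sigma>2 * r powr \<alpha> / P))
        * exp (- (\<Sum>n. real l * ln (1 + \<gamma> * r powr \<alpha> * cmod (Y n \<omega>) powr (-\<alpha>))))"
  using AE_points_in AE_summable_powr[OF \<alpha>]
proof eventually_elim
  case (elim \<omega>)
  then have "0 < cmod (Y n \<omega>)" for n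
    using radius_pos less_le_trans[of 0 D "cmod (Y n \<omega>)"] by simp
  with elim show ?case
    by (simp add: prob_sinr_coverage_given_points[OF P \<sigma>2 \<gamma> r])
qed

lemma coverage_prob_given_distance:
  assumes \<alpha>: "2 < \<alpha>" and P: "0 < P" and \<sigma>2: "0 \<le> \<sigma>2" and \<gamma>: "0 \<le> \<gamma>" and r: "0 < r"
  shows "(\<integral>\<omega>. of_bool (sinr_coverage P \<alpha> \<sigma>2 \<gamma> l r (\<lambda>n. Y n \<omega>) (\<lambda>(k, \<beta>). h k \<beta> \<omega>)) \<partial>M)
       = exp (- (real l * \<gamma> * \<sigma>2 * r powr \<alpha> / P)) * exp (- 2 * pi * \<mu> * F_i \<alpha> \<gamma> l D r)"
proof -
  define c where "c = \<gamma> * r powr \<alpha>"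
  have c: "0 \<le> c" and "0 < \<alpha>"
    using \<gamma> \<alpha> by (simp_all add: c_def)
  note \<psi> = interference_exponent_nonneg[OF c \<open>0 < \<alpha>\<close> radius_pos]
    interference_exponent_antimono[OF c \<open>0 < \<alpha>\<close> radius_pos]
    interference_exponent_continuous[OF c \<open>0 < \<alpha>\<close> radius_pos]
    interference_exponent_le[OF c \<open>0 < \<alpha>\<close> radius_pos]
  let ?f = "\<lambda>(y, g). of_bool (sinr_coverage P \<alpha> \<sigma>2 \<gamma> l r y g) :: real"
  have "(\<integral>\<omega>. ?f (\<lambda>n. Y n \<omega>, \<lambda>(k, \<beta>). h k \<beta> \<omega>) \<partial>M)
      = (\<integral>\<omega>. (\<integral>\<omega>'. ?f (\<lambda>n. Y n \<omega>, \<lambda>(k, \<beta>). h k \<beta> \<omega>') \<partial>M) \<partial>M)"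
    by (rule indep_set_vimage_integral_iterated[OF _ _ indep_points_fading])
       (auto intro: integrable_const_bound[where B=1])
  also have "\<dots> = (\<integral>\<omega>. exp (- (real l * \<gamma> * \<sigma>2 * r powr \<alpha> / P))
        * exp (- (\<Sum>n. real l * ln (1 + c * cmod (Y n \<omega>) powr (-\<alpha>)))) \<partial>M)"
    using AE_coverage_prob_given_points[OF \<alpha> P \<sigma>2 \<gamma> r]
    by (intro integral_cong_AE) (simp_all add: c_def)
  also have "\<dots> = exp (- (real l * \<gamma> * \<sigma>2 * r powr \<alpha> / P))
        * exp (- (2 * pi * \<mu> * (LBINT t:{D..}. (1 - exp (- (real l * ln (1 + c * t powr (-\<alpha>))))) * t)))"
    by (subst laplace_functional[OF \<alpha> _ \<psi>, symmetric]) simp_all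
  also have "(LBINT t:{D..}. (1 - exp (- (real l * ln (1 + c * t powr (-\<alpha>))))) * t) = F_i \<alpha> \<gamma> l D r"
    by (simp add: F_i_def c_def[symmetric] exp_interference_exponent[OF c \<open>0 < \<alpha>\<close> radius_pos])
  finally show ?thesis
    by simp
qed

lemma coverage_prob_random_distance:
  fixes R :: "'a \<Rightarrow> real" and f :: "real \<Rightarrow> real"
  assumes R: "distributed M lborel R (\<lambda>r. ennreal (f r))" and f_nonneg: "\<And>r. 0 \<le> f r"
    and indep_R: "indep_set (sets (vimage_algebra (space M) R borel))
      (sets (vimage_algebra (space M) (\<lambda>\<omega>. ((\<lambda>n. Y n \<omega>), (\<lambda>(k, \<beta>). h k \<beta> \<omega>)))
         (PiM UNIV (\<lambda>_. borel) \<Otimes>\<^sub>M PiM UNIV (\<lambda>_. borel))))"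
  shows "(\<integral>\<omega>. of_bool (sinr_coverage P \<alpha> \<sigma>2 \<gamma> l (R \<omega>) (\<lambda>n. Y n \<omega>) (\<lambda>(k, \<beta>). h k \<beta> \<omega>)) \<partial>M)
       = (\<integral>r. f r * (\<integral>\<omega>. of_bool (sinr_coverage P \<alpha> \<sigma>2 \<gamma> l r (\<lambda>n. Y n \<omega>) (\<lambda>(k, \<beta>). h k \<beta> \<omega>)) \<partial>M) \<partial>lborel)"
proof -
  have [measurable]: "R \<in> borel_measurable M"
    using distributed_measurable[OF R] by (simp add: measurable_lborel2)
  let ?f = "\<lambda>(r, y, g). of_bool (sinr_coverage P \<alpha> \<sigma>2 \<gamma> l r y g) :: real"
  have "(\<lambda>\<omega>. ?f (R \<omega>, (\<lambda>n. Y n \<omega>), (\<lambda>(k, \<beta>). h k \<beta> \<omega>))) \<in> borel_measurable M"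
    by (rule measurable_compose[OF _ sinr_coverage_measurable_triple]) measurable
  then have "(\<integral>\<omega>. ?f (R \<omega>, (\<lambda>n. Y n \<omega>), (\<lambda>(k, \<beta>). h k \<beta> \<omega>)) \<partial>M)
      = (\<integral>\<omega>. (\<integral>\<omega>'. ?f (R \<omega>, (\<lambda>n. Y n \<omega>'), (\<lambda>(k, \<beta>). h k \<beta> \<omega>')) \<partial>M) \<partial>M)"
    by (intro indep_set_vimage_integral_iterated[OF _ _ indep_R] integrable_const_bound[where B=1]) auto
  also have "\<dots> = (\<integral>r. f r * (\<integral>\<omega>'. ?f (r, (\<lambda>n. Y n \<omega>'), (\<lambda>(k, \<beta>). h k \<beta> \<omega>')) \<partial>M) \<partial>lborel)"
  proof (rule distributed_integral[symmetric, OF R _ f_nonneg])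
    have "(\<lambda>x. ?f ((\<lambda>(r, \<omega>). (r, (\<lambda>n. Y n \<omega>), (\<lambda>(k, \<beta>). h k \<beta> \<omega>))) x)) \<in> borel_measurable (borel \<Otimes>\<^sub>M M)"
      by (rule measurable_compose[OF _ sinr_coverage_measurable_triple]) measurable
    then have "case_prod (\<lambda>r \<omega>. ?f (r, (\<lambda>n. Y n \<omega>), (\<lambda>(k, \<beta>). h k \<beta> \<omega>))) \<in> borel_measurable (borel \<Otimes>\<^sub>M M)"
      by (simp add: case_prod_beta')
    from borel_measurable_lebesgue_integral[OF this]
    show "(\<lambda>r. \<integral>\<omega>'. ?f (r, (\<lambda>n. Y n \<omega>'), (\<lambda>(k, \<beta>). h k \<beta> \<omega>')) \<partial>M) \<in> borel_measurable lborel"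
      by simp
  qed
  finally show ?thesis
    by simp
qed

end

theorem lemma3:
  fixes M :: "'a measure"
    and \<alpha> P \<sigma>2 \<gamma> \<mu> D0 D1 :: real and l :: nat
    and R :: "'a \<Rightarrow> real"
    and Y :: "nat \<Rightarrow> 'a \<Rightarrow> complex"
    and h :: "nat option \<Rightarrow> nat \<Rightarrow> 'a \<Rightarrow> real"
  assumes "prob_space M"
    and "\<alpha> > 2" and "P > 0" and "\<sigma>2 \<ge> 0" and "\<gamma> > 0" and "\<mu> > 0" and "l \<ge> 1"
    and "0 < D0" and "D0 < D1"
    and R_distr: "distributed M lborel R
           (\<lambda>r. ennreal (indicator {D0..D1} r * (2 * r / (D1\<^sup>2 - D0\<^sup>2))))"
    and PPP: "poisson_pp M \<mu> {y. D1 \<le> cmod y} Y"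
    and h_exp: "\<And>k \<beta>. distributed M lborel (h k \<beta>) (exponential_density 1)"
    and h_indep: "prob_space.indep_vars M (\<lambda>_. borel) (\<lambda>(k, \<beta>). h k \<beta>) UNIV"
    and Y_meas: "(\<lambda>\<omega> n. Y n \<omega>) \<in> M \<rightarrow>\<^sub>M PiM UNIV (\<lambda>_. borel)"
    and h_meas: "(\<lambda>\<omega> (k, \<beta>). h k \<beta> \<omega>) \<in> M \<rightarrow>\<^sub>M PiM UNIV (\<lambda>_. borel)"
    and indep_R: "prob_space.indep_set M
           (sets (vimage_algebra (space M) R borel))
           (sets (vimage_algebra (space M) (\<lambda>\<omega>. ((\<lambda>n. Y n \<omega>), (\<lambda>(k, \<beta>). h k \<beta> \<omega>)))
                    (PiM UNIV (\<lambda>_. borel) \<Otimes>\<^sub>M PiM UNIV (\<lambda>_. borel))))"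
    and indep_Y: "prob_space.indep_set M
           (sets (vimage_algebra (space M) (\<lambda>\<omega> n. Y n \<omega>) (PiM UNIV (\<lambda>_. borel))))
           (sets (vimage_algebra (space M) (\<lambda>\<omega> (k, \<beta>). h k \<beta> \<omega>) (PiM UNIV (\<lambda>_. borel))))"
  shows "measure M {\<omega> \<in> space M. \<forall>\<beta>\<in>{1..l}.
            P * h None \<beta> \<omega> * R \<omega> powr (-\<alpha>)
              / ((\<Sum>n. P * h (Some n) \<beta> \<omega> * cmod (Y n \<omega>) powr (-\<alpha>)) + \<sigma>2) \<ge> \<gamma>}
         = (LBINT r:{D0..D1}. exp (- (real l * \<gamma> * \<sigma>2 * r powr \<alpha> / P))
              * exp (- 2 * pi * \<mu> * F_i \<alpha> \<gamma> l D1 r)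
              * (2 * r / (D1\<^sup>2 - D0\<^sup>2)))"
proof -
  interpret prob_space M by fact
  interpret uplink_model M \<mu> D1 Y h
    using assms by unfold_locales auto
  have "(\<integral>\<omega>. of_bool (sinr_coverage P \<alpha> \<sigma>2 \<gamma> l (R \<omega>) (\<lambda>n. Y n \<omega>) (\<lambda>(k, \<beta>). h k \<beta> \<omega>)) \<partial>M)
      = (\<integral>r. indicator {D0..D1} r * (2 * r / (D1\<^sup>2 - D0\<^sup>2))
          * (\<integral>\<omega>. of_bool (sinr_coverage P \<alpha> \<sigma>2 \<gamma> l r (\<lambda>n. Y n \<omega>) (\<lambda>(k, \<beta>). h k \<beta> \<omega>)) \<partial>M) \<partial>lborel)"
    using R_distr indep_R \<open>0 < D0\<close> \<open>D0 < D1\<close>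
    by (intro coverage_prob_random_distance) (auto simp: indicator_def intro!: power_strict_mono)
  also have "\<dots> = (LBINT r:{D0..D1}. exp (- (real l * \<gamma> * \<sigma>2 * r powr \<alpha> / P))
      * exp (- 2 * pi * \<mu> * F_i \<alpha> \<gamma> l D1 r) * (2 * r / (D1\<^sup>2 - D0\<^sup>2)))"
    using assms unfolding set_lebesgue_integral_def
    by (intro Bochner_Integration.integral_cong) (auto simp: indicator_def coverage_prob_given_distance)
  finally show ?thesis
    by (simp add: integral_of_bool_eq_measure sinr_coverage_def)
qed

end
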